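(* Let $E$ and $X$ be Banach spaces. Then there exists an ultrafilter $\mathcal{U}$ (on some index set $I$) such that \[\mathcal F(E,X)^*\cong (E\widehat{\otimes} X^* )_\mathcal{U}/W_0,\] where $W_0=\left\{ (u_\alpha)_\mathcal{U}\in (E\widehat{\otimes} X^* )_\mathcal{U} : \lim_\mathcal{U}u_\alpha(T)=0 \text{ for all } T\in \mathcal{F}(E,X)\right\}$.
   Context: $\mathcal F(E,X)$ denotes the space of bounded finite-rank linear operators from $E$ to $X$ (with the operator norm), and $\mathcal F(E,X)^*$ its dual. $E\widehat{\otimes} X^*$ is the projective tensor product. For $u=\sum_{i=1}^\infty a_i\otimes x_i^*\in E\widehat{\otimes} X^*$ and a bounded operator $T:E\to X$, $u(T)$ denotes $\sum_{i=1}^\infty x_i^*(T(a_i))$. For a Banach space $Y$, an index set $I$ and an ultrafilter $\mathcal U$ on $I$, the ultrapower is $Y_\mathcal{U}=\ell^\infty(Y,I)/\mathcal N_\mathcal{U}$, where $\ell^\infty(Y,I)$ is the space of bounded families $(y_\alpha)_{\alpha\in I}$ in $Y$ with the sup norm and $\mathcal N_\mathcal{U}=\{(y_\alpha): \lim_\mathcal{U}\|y_\alpha\|=0\}$; its norm is $\|(y_\alpha)_\mathcal U\|=\lim_\mathcal U\|y_\alpha\|$, and $(y_\alpha)_\mathcal U$ denotes the class of $(y_\alpha)$. The symbol $\cong$ denotes isometric isomorphism of Banach spaces. *)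

theory Defs
  imports "HOL-Analysis.Analysis"
begin

(* Real Banach spaces; scalars are real.  X^* is the blinfun type 'x \<Rightarrow>\<^sub>L real. *)

definition ultrafilter :: "'i filter \<Rightarrow> bool" where
  "ultrafilter U \<longleftrightarrow> U \<noteq> bot \<and> (\<forall>P. eventually P U \<or> eventually (\<lambda>x. \<not> P x) U)"

definition finite_rank :: "('e::real_normed_vector \<Rightarrow>\<^sub>L 'x::real_normed_vector) \<Rightarrow> bool" where
  "finite_rank T \<longleftrightarrow> (\<exists>B. finite B \<and> range (blinfun_apply T) \<subseteq> span B)"

definition FR :: "('e::real_normed_vector \<Rightarrow>\<^sub>L 'x::real_normed_vector) set" where
  "FR = {T. finite_rank T}"

(* The dual F(E,X)^*: bounded linear functionals on F(E,X), extended by 0 outside F(E,X) *)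
definition fin_dual :: "(('e::real_normed_vector \<Rightarrow>\<^sub>L 'x::real_normed_vector) \<Rightarrow> real) set" where
  "fin_dual = {\<phi>. (\<forall>T\<in>FR. \<forall>S\<in>FR. \<phi> (T + S) = \<phi> T + \<phi> S)
                 \<and> (\<forall>c. \<forall>T\<in>FR. \<phi> (c *\<^sub>R T) = c * \<phi> T)
                 \<and> (\<exists>C. \<forall>T\<in>FR. \<bar>\<phi> T\<bar> \<le> C * norm T)
                 \<and> (\<forall>T. T \<notin> FR \<longrightarrow> \<phi> T = 0)}"

definition dual_norm :: "(('e::real_normed_vector \<Rightarrow>\<^sub>L 'x::real_normed_vector) \<Rightarrow> real) \<Rightarrow> real" where
  "dual_norm \<phi> = Sup {\<bar>\<phi> T\<bar> | T. T \<in> FR \<and> norm T \<le> 1}"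

(* Projective tensor product E \<hat>\<otimes> X^*, realised (isometrically, via the canonical
   embedding into the dual of the bounded bilinear forms on E \<times> X^* ) as the functionals
   B \<mapsto> \<Sum>i. B (a i) (f i) for representations with \<Sum>i. \<parallel>a i\<parallel>\<parallel>f i\<parallel> < \<infinity>,
   with the projective norm (infimum over representations). *)
type_synonym ('e, 'x) ptens = "('e \<Rightarrow> ('x \<Rightarrow>\<^sub>L real) \<Rightarrow> real) \<Rightarrow> real"

definition rep_ok :: "(nat \<Rightarrow> 'e::real_normed_vector) \<Rightarrow> (nat \<Rightarrow> ('x::real_normed_vector \<Rightarrow>\<^sub>L real)) \<Rightarrow> bool" where
  "rep_ok a f \<longleftrightarrow> summable (\<lambda>i. norm (a i) * norm (f i))"

definition tens_rep :: "(nat \<Rightarrow> 'e::real_normed_vector) \<Rightarrow> (nat \<Rightarrow> ('x::real_normed_vector \<Rightarrow>\<^sub>L real)) \<Rightarrow> ('e, 'x) ptens" where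
  "tens_rep a f = (\<lambda>B. if bounded_bilinear B then (\<Sum>i. B (a i) (f i)) else 0)"

definition proj_tensor :: "('e::real_normed_vector, 'x::real_normed_vector) ptens set" where
  "proj_tensor = {tens_rep a f | a f. rep_ok a f}"

definition proj_norm :: "('e::real_normed_vector, 'x::real_normed_vector) ptens \<Rightarrow> real" where
  "proj_norm u = Inf {(\<Sum>i. norm (a i) * norm (f i)) | a f. rep_ok a f \<and> tens_rep a f = u}"

(* u(T) = \<Sum>i. x_i^*(T a_i) *)
definition tens_eval :: "('e::real_normed_vector, 'x::real_normed_vector) ptens \<Rightarrow> ('e \<Rightarrow>\<^sub>L 'x) \<Rightarrow> real" where
  "tens_eval u T = u (\<lambda>a f. blinfun_apply f (blinfun_apply T a))"

(* Ultrapower (E \<hat>\<otimes> X^* )_U = \<ell>^\<infinity>(E \<hat>\<otimes> X^*, I) / N_U, index set I = UNIV of the index type *)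
definition bdd_fam :: "('i \<Rightarrow> ('e::real_normed_vector, 'x::real_normed_vector) ptens) set" where
  "bdd_fam = {\<xi>. (\<forall>\<alpha>. \<xi> \<alpha> \<in> proj_tensor) \<and> (\<exists>M. \<forall>\<alpha>. proj_norm (\<xi> \<alpha>) \<le> M)}"

definition fam_diff :: "('i \<Rightarrow> ('e, 'x) ptens) \<Rightarrow> ('i \<Rightarrow> ('e, 'x) ptens) \<Rightarrow> ('i \<Rightarrow> ('e, 'x) ptens)" where
  "fam_diff \<eta> \<xi> = (\<lambda>\<alpha> B. \<eta> \<alpha> B - \<xi> \<alpha> B)"

definition ucls :: "'i filter \<Rightarrow> ('i \<Rightarrow> ('e::real_normed_vector, 'x::real_normed_vector) ptens) \<Rightarrow> ('i \<Rightarrow> ('e, 'x) ptens) set" where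
  "ucls U \<xi> = {\<eta> \<in> bdd_fam. ((\<lambda>\<alpha>. proj_norm (fam_diff \<eta> \<xi> \<alpha>)) \<longlongrightarrow> 0) U}"

definition ultrapower :: "'i filter \<Rightarrow> (('i \<Rightarrow> ('e::real_normed_vector, 'x::real_normed_vector) ptens) set) set" where
  "ultrapower U = {ucls U \<xi> | \<xi>. \<xi> \<in> bdd_fam}"

definition W0 :: "'i filter \<Rightarrow> (('i \<Rightarrow> ('e::real_normed_vector, 'x::real_normed_vector) ptens) set) set" where
  "W0 U = {ucls U \<xi> | \<xi>. \<xi> \<in> bdd_fam \<and>
             (\<forall>T \<in> FR. ((\<lambda>\<alpha>. tens_eval (\<xi> \<alpha>) T) \<longlongrightarrow> 0) U)}"

definition qcls :: "'i filter \<Rightarrow> ('i \<Rightarrow> ('e::real_normed_vector, 'x::real_normed_vector) ptens) \<Rightarrow> (('i \<Rightarrow> ('e, 'x) ptens) set) set" where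
  "qcls U \<xi> = {ucls U \<eta> | \<eta>. \<eta> \<in> bdd_fam \<and> ucls U (fam_diff \<eta> \<xi>) \<in> W0 U}"

definition ultra_quot :: "'i filter \<Rightarrow> ((('i \<Rightarrow> ('e::real_normed_vector, 'x::real_normed_vector) ptens) set) set) set" where
  "ultra_quot U = {qcls U \<xi> | \<xi>. \<xi> \<in> bdd_fam}"

definition quot_norm :: "'i filter \<Rightarrow> (('i \<Rightarrow> ('e::real_normed_vector, 'x::real_normed_vector) ptens) set) set \<Rightarrow> real" where
  "quot_norm U C = Inf {Lim U (\<lambda>\<alpha>. proj_norm (\<eta> \<alpha>)) | \<eta>. \<eta> \<in> bdd_fam \<and> ucls U \<eta> \<in> C}"

definition isometric_iso_dual_quot ::
  "'i filter \<Rightarrow> ((('e::real_normed_vector \<Rightarrow>\<^sub>L 'x::real_normed_vector) \<Rightarrow> real) \<Rightarrow> (('i \<Rightarrow> ('e, 'x) ptens) set) set) \<Rightarrow> bool" where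
  "isometric_iso_dual_quot U \<Phi> \<longleftrightarrow>
     bij_betw \<Phi> fin_dual (ultra_quot U)
   \<and> (\<forall>\<phi>\<in>fin_dual. \<forall>\<psi>\<in>fin_dual. \<forall>c::real. \<forall>\<xi> \<eta>.
        \<xi> \<in> bdd_fam \<longrightarrow> \<eta> \<in> bdd_fam \<longrightarrow> \<Phi> \<phi> = qcls U \<xi> \<longrightarrow> \<Phi> \<psi> = qcls U \<eta> \<longrightarrow>
        \<Phi> (\<lambda>T. c * \<phi> T + \<psi> T) = qcls U (\<lambda>\<alpha> B. c * \<xi> \<alpha> B + \<eta> \<alpha> B))
   \<and> (\<forall>\<phi>\<in>fin_dual. quot_norm U (\<Phi> \<phi>) = dual_norm \<phi>)"

end

(*
  Index the ultrapower by pairs (G, r) of a finite set G of finite-rank operators and a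
  tolerance r > 0, and let U be an ultrafilter refining the filter "G grows and r tends to 0".
  A Helly-type lemma, proved by applying Hahn-Banach to a gauge on functionals, shows that every
  phi in F(E,X)^* agrees up to r on G with a finite tensor of projective norm at most ||phi|| + r.
  Along U these tensors converge to phi pointwise, and phi is sent to the set of classes of
  bounded families whose pointwise U-limit is phi. A coset of W_0 is determined by exactly these
  pointwise limits, which makes the map a linear bijection. It is isometric because
  |u(T)| <= ||u|| ||T|| bounds ||phi|| by the norm of every family in the coset, while the Helly
  tensors come within r of it.
*)

theory Submission
  imports Defs "HOL-Library.Function_Algebras"
begin

section \<open>Ultrafilters\<close>

lemma ultrafilter_neq_bot: "ultrafilter U \<Longrightarrow> U \<noteq> bot"
  by (simp add: ultrafilter_def)

lemma Inf_filter_chain_neq_bot: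
  fixes C :: "'a filter set"
  assumes "C \<noteq> {}" and "bot \<notin> C" and chain: "\<And>F G. F \<in> C \<Longrightarrow> G \<in> C \<Longrightarrow> F \<le> G \<or> G \<le> F"
  shows "Inf C \<noteq> bot"
proof -
  have "eventually (\<lambda>_. False) (Inf C) \<longleftrightarrow> (\<exists>F\<in>C. eventually (\<lambda>_. False) F)"
    by (rule eventually_Inf_base[OF \<open>C \<noteq> {}\<close>]) (metis chain inf.absorb1 inf.absorb2 order_refl)
  with \<open>bot \<notin> C\<close> show ?thesis
    by (auto simp: eventually_False)
qed

lemma ultrafilterI_maximal:
  assumes "U \<noteq> bot" and maximal: "\<And>G. G \<noteq> bot \<Longrightarrow> G \<le> U \<Longrightarrow> G = U"
  shows "ultrafilter U"
  unfolding ultrafilter_def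
proof (intro conjI allI \<open>U \<noteq> bot\<close>)
  fix P
  show "eventually P U \<or> eventually (\<lambda>x. \<not> P x) U"
  proof (rule disjCI)
    assume "\<not> eventually (\<lambda>x. \<not> P x) U"
    then have "inf U (principal {x. P x}) \<noteq> bot"
      by (simp add: trivial_limit_def eventually_inf_principal)
    then have "inf U (principal {x. P x}) = U"
      by (rule maximal) simp
    moreover have "eventually P (inf U (principal {x. P x}))"
      by (simp add: eventually_inf_principal)
    ultimately show "eventually P U"
      by simp
  qed
qed

lemma exists_ultrafilter_le:
  fixes F :: "'a filter"
  assumes "F \<noteq> bot"
  shows "\<exists>U\<le>F. ultrafilter U"
proof -
  let ?A = "{G. G \<noteq> bot \<and> G \<le> F}"
  have "\<exists>U\<in>?A. \<forall>G\<in>?A. G \<le> U \<longrightarrow> G = U"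
  proof (rule predicate_Zorn)
    show "partial_order_on ?A (relation_of (\<lambda>G H. H \<le> G) ?A)"
      by (rule partial_order_on_relation_ofI) auto
  next
    fix C assume C: "C \<in> Chains (relation_of (\<lambda>G H. H \<le> G) ?A)"
    then have CA: "C \<subseteq> ?A" and chain: "\<And>G H. G \<in> C \<Longrightarrow> H \<in> C \<Longrightarrow> G \<le> H \<or> H \<le> G"
      by (auto simp: Chains_def relation_of_def)
    show "\<exists>U\<in>?A. \<forall>G\<in>C. U \<le> G"
    proof (cases "C = {}")
      case True
      with assms show ?thesis by auto
    next
      case False
      have "Inf C \<noteq> bot"
        by (rule Inf_filter_chain_neq_bot[OF False _ chain]) (use CA in auto)
      moreover obtain G where "G \<in> C" using False by auto
      then have "Inf C \<le> F" using CA by (auto intro: Inf_lower2)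
      ultimately show ?thesis by (auto intro: Inf_lower)
    qed
  qed
  then obtain U where U: "U \<noteq> bot" "U \<le> F" and maximal: "\<And>G. G \<in> ?A \<Longrightarrow> G \<le> U \<Longrightarrow> G = U"
    by blast
  have "ultrafilter U"
    by (rule ultrafilterI_maximal[OF U(1)]) (use U(2) in \<open>auto intro: maximal\<close>)
  with U(2) show ?thesis by blast
qed

lemma ultrafilter_tendsto_Lim:
  fixes f :: "'a \<Rightarrow> 'b::t2_space"
  assumes U: "ultrafilter U" and "compact K" and "eventually (\<lambda>x. f x \<in> K) U"
  shows "(f \<longlongrightarrow> Lim U f) U"
proof -
  have "filtermap f U \<noteq> bot" "eventually (\<lambda>y. y \<in> K) (filtermap f U)"
    using assms by (simp_all add: ultrafilter_neq_bot filtermap_bot_iff eventually_filtermap)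
  then obtain l where l: "inf (nhds l) (filtermap f U) \<noteq> bot"
    using \<open>compact K\<close> unfolding compact_filter by blast
  have lim: "(f \<longlongrightarrow> l) U"
    unfolding tendsto_def
  proof (intro allI impI)
    fix S assume "open S" "l \<in> S"
    show "eventually (\<lambda>x. f x \<in> S) U"
    proof (rule ccontr)
      assume "\<not> eventually (\<lambda>x. f x \<in> S) U"
      with U have "eventually (\<lambda>y. y \<notin> S) (filtermap f U)"
        by (auto simp: ultrafilter_def eventually_filtermap)
      moreover have "eventually (\<lambda>y. y \<in> S) (nhds l)"
        using \<open>open S\<close> \<open>l \<in> S\<close> eventually_nhds by blast
      ultimately have "eventually (\<lambda>_. False) (inf (nhds l) (filtermap f U))"
        unfolding eventually_inf by blast
      with l show False by (simp add: eventually_False)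
    qed
  qed
  moreover have "Lim U f = l"
    using U lim by (simp add: tendsto_Lim ultrafilter_neq_bot)
  ultimately show ?thesis
    by simp
qed

lemma ultrafilter_tendsto_Lim_real:
  fixes f :: "'a \<Rightarrow> real"
  assumes "ultrafilter U" and "\<And>x. \<bar>f x\<bar> \<le> M"
  shows "(f \<longlongrightarrow> Lim U f) U"
proof (rule ultrafilter_tendsto_Lim[OF assms(1) compact_Icc[of "-M" M]])
  have "f x \<in> {-M..M}" for x
    using assms(2)[of x] by auto
  then show "eventually (\<lambda>x. f x \<in> {-M..M}) U"
    by simp
qed

section \<open>The Hahn--Banach theorem for sublinear functionals\<close>

definition sublinear :: "('a::real_vector \<Rightarrow> real) \<Rightarrow> bool" where
  "sublinear p \<longleftrightarrow> (\<forall>x y. p (x + y) \<le> p x + p y) \<and> (\<forall>c x. 0 < c \<longrightarrow> p (c *\<^sub>R x) = c * p x)"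

lemma sublinearD:
  assumes "sublinear p"
  shows sublinear_add: "p (x + y) \<le> p x + p y"
    and sublinear_scaleR: "0 < c \<Longrightarrow> p (c *\<^sub>R x) = c * p x"
    and sublinear_zero: "p 0 = 0"
    and sublinear_minus: "- p (- x) \<le> p x"
proof -
  show add: "p (x + y) \<le> p x + p y" for x y
    using assms by (simp add: sublinear_def)
  show scale: "0 < c \<Longrightarrow> p (c *\<^sub>R x) = c * p x" for c x
    using assms by (simp add: sublinear_def)
  show zero: "p 0 = 0"
    using scale[of 2 0] by simp
  show "- p (- x) \<le> p x"
    using add[of x "- x"] zero by simp
qed

definition dominated_linear_graph :: "('a::real_vector \<Rightarrow> real) \<Rightarrow> ('a \<times> real) set \<Rightarrow> bool" where
  "dominated_linear_graph p H \<longleftrightarrow> (0, 0) \<in> H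
     \<and> (\<forall>x r y s. (x, r) \<in> H \<longrightarrow> (y, s) \<in> H \<longrightarrow> (x + y, r + s) \<in> H)
     \<and> (\<forall>c x r. (x, r) \<in> H \<longrightarrow> (c *\<^sub>R x, c * r) \<in> H)
     \<and> (\<forall>r. (0, r) \<in> H \<longrightarrow> r = 0)
     \<and> (\<forall>x r. (x, r) \<in> H \<longrightarrow> r \<le> p x)"

lemma dominated_linear_graphD:
  assumes "dominated_linear_graph p H"
  shows "(0, 0) \<in> H"
    and "(x, r) \<in> H \<Longrightarrow> (y, s) \<in> H \<Longrightarrow> (x + y, r + s) \<in> H"
    and "(x, r) \<in> H \<Longrightarrow> (c *\<^sub>R x, c * r) \<in> H"
    and "(0, r) \<in> H \<Longrightarrow> r = 0"
    and "(x, r) \<in> H \<Longrightarrow> r \<le> p x"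
  using assms by (auto simp: dominated_linear_graph_def)

lemma dominated_linear_graph_unique:
  assumes H: "dominated_linear_graph p H" and "(x, r) \<in> H" "(x, s) \<in> H"
  shows "r = s"
proof -
  have "(x + (- 1) *\<^sub>R x, r + (- 1) * s) \<in> H"
    using assms by (intro dominated_linear_graphD(2,3)[OF H])
  then show ?thesis
    using dominated_linear_graphD(4)[OF H] by force
qed

lemma dominated_linear_graph_line:
  assumes p: "sublinear p"
  shows "dominated_linear_graph p (range (\<lambda>t. (t *\<^sub>R y, t * p y)))"
  unfolding dominated_linear_graph_def
proof (intro conjI allI impI)
  fix x r assume "(x, r) \<in> range (\<lambda>t. (t *\<^sub>R y, t * p y))"
  then obtain t where x: "x = t *\<^sub>R y" and r: "r = t * p y" by auto
  show "r \<le> p x"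
  proof (cases "t \<ge> 0")
    case True
    then show ?thesis
      using sublinear_scaleR[OF p, of t y] sublinear_zero[OF p] x r
      by (cases "t = 0") auto
  next
    case False
    then have "p ((- t) *\<^sub>R y) = - t * p y"
      using sublinear_scaleR[OF p, of "- t" y] by simp
    then show ?thesis
      using sublinear_minus[OF p, of x] x r by simp
  qed
qed (auto simp: sublinear_zero[OF p] scaleR_add_left[symmetric] distrib_right[symmetric]
    image_iff intro: exI[of _ 0])

lemma dominated_linear_graph_Union_chain:
  assumes "C \<noteq> {}" and dom: "\<And>H. H \<in> C \<Longrightarrow> dominated_linear_graph p H"
    and chain: "subset.chain A C"
  shows "dominated_linear_graph p (\<Union>C)"
  unfolding dominated_linear_graph_def
proof (intro conjI allI impI)
  show "(0, 0) \<in> \<Union>C"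
    using \<open>C \<noteq> {}\<close> dom dominated_linear_graphD(1) by blast
next
  fix x r y s
  assume "(x, r) \<in> \<Union>C" "(y, s) \<in> \<Union>C"
  then obtain H H' where H: "H \<in> C" "(x, r) \<in> H" and H': "H' \<in> C" "(y, s) \<in> H'"
    by blast
  from chain H(1) H'(1) have "H \<subseteq> H' \<or> H' \<subseteq> H"
    by (auto simp: subset.chain_def)
  then show "(x + y, r + s) \<in> \<Union>C"
    using H H' dom dominated_linear_graphD(2) by blast
qed (use dom dominated_linear_graphD(3-5) in blast)+

lemma dominated_extension_step:
  assumes p: "sublinear p" and H: "dominated_linear_graph p H" and "(x, r) \<in> H"
    and c_up: "\<And>x r. (x, r) \<in> H \<Longrightarrow> c \<le> p (x + z) - r"
    and c_lo: "\<And>x r. (x, r) \<in> H \<Longrightarrow> r - p (x - z) \<le> c"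
  shows "r + t * c \<le> p (x + t *\<^sub>R z)"
proof -
  have scaled: "((1 / s) *\<^sub>R x, (1 / s) * r) \<in> H" for s
    using \<open>(x, r) \<in> H\<close> dominated_linear_graphD(3)[OF H] by blast
  consider "t = 0" | "t > 0" | "t < 0" by linarith
  then show ?thesis
  proof cases
    case 1
    then show ?thesis
      using \<open>(x, r) \<in> H\<close> dominated_linear_graphD(5)[OF H] by simp
  next
    case 2
    have "t * c \<le> t * (p ((1 / t) *\<^sub>R x + z) - (1 / t) * r)"
      using c_up[OF scaled[of t]] 2 by (simp add: mult_left_mono)
    also have "\<dots> = p (x + t *\<^sub>R z) - r"
      using 2 sublinear_scaleR[OF p 2, of "(1 / t) *\<^sub>R x + z"] by (simp add: algebra_simps)
    finally show ?thesis
      by simp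
  next
    case 3
    define s where "s = - t"
    have s: "0 < s"
      using 3 by (simp add: s_def)
    have "r - p (x + t *\<^sub>R z) = s * ((1 / s) * r - p ((1 / s) *\<^sub>R x - z))"
      using sublinear_scaleR[OF p s, of "(1 / s) *\<^sub>R x - z"] s
      by (simp add: s_def algebra_simps)
    also have "\<dots> \<le> s * c"
      using c_lo[OF scaled[of s]] s by (simp add: mult_left_mono)
    finally show ?thesis
      by (simp add: s_def)
  qed
qed

lemma dominated_linear_graph_extend_by:
  assumes p: "sublinear p" and H: "dominated_linear_graph p H" and new: "\<nexists>r. (z, r) \<in> H"
    and c_up: "\<And>x r. (x, r) \<in> H \<Longrightarrow> c \<le> p (x + z) - r"
    and c_lo: "\<And>x r. (x, r) \<in> H \<Longrightarrow> r - p (x - z) \<le> c"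
  shows "dominated_linear_graph p {(x + t *\<^sub>R z, r + t * c) | x r t. (x, r) \<in> H}"
    (is "dominated_linear_graph p ?H'")
proof -
  have mem: "(x + t *\<^sub>R z, r + t * c) \<in> ?H'" if "(x, r) \<in> H" for x r t
    using that by blast
  show ?thesis
    unfolding dominated_linear_graph_def
  proof (intro conjI allI impI)
    show "(0, 0) \<in> ?H'"
      using dominated_linear_graphD(1)[OF H] by force
  next
    fix x r y s
    assume "(x, r) \<in> ?H'" "(y, s) \<in> ?H'"
    then obtain x1 r1 t1 x2 r2 t2 where "(x1, r1) \<in> H" "(x2, r2) \<in> H"
      and "x = x1 + t1 *\<^sub>R z" "r = r1 + t1 * c" "y = x2 + t2 *\<^sub>R z" "s = r2 + t2 * c"
      by blast
    moreover have "(x1 + x2, r1 + r2) \<in> H"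
      using calculation dominated_linear_graphD(2)[OF H] by blast
    ultimately show "(x + y, r + s) \<in> ?H'"
      using mem[of "x1 + x2" "r1 + r2" "t1 + t2"] by (simp add: algebra_simps)
  next
    fix a x r
    assume "(x, r) \<in> ?H'"
    then obtain x1 r1 t where "(x1, r1) \<in> H" "x = x1 + t *\<^sub>R z" "r = r1 + t * c"
      by blast
    moreover have "(a *\<^sub>R x1, a * r1) \<in> H"
      using calculation dominated_linear_graphD(3)[OF H] by blast
    ultimately show "(a *\<^sub>R x, a * r) \<in> ?H'"
      using mem[of "a *\<^sub>R x1" "a * r1" "a * t"] by (simp add: algebra_simps)
  next
    fix r
    assume "(0, r) \<in> ?H'"
    then obtain x1 r1 t where x1: "(x1, r1) \<in> H" "0 = x1 + t *\<^sub>R z" "r = r1 + t * c"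
      by blast
    show "r = 0"
    proof (cases "t = 0")
      case True
      then show ?thesis
        using x1 dominated_linear_graphD(4)[OF H] by simp
    next
      case False
      then have "(- 1 / t) *\<^sub>R x1 = z"
        using x1(2) by (simp add: eq_neg_iff_add_eq_0[symmetric])
      moreover have "((- 1 / t) *\<^sub>R x1, (- 1 / t) * r1) \<in> H"
        using x1(1) dominated_linear_graphD(3)[OF H] by blast
      ultimately show ?thesis
        using new by auto
    qed
  next
    fix x r
    assume "(x, r) \<in> ?H'"
    then show "r \<le> p x"
      using dominated_extension_step[OF p H _ c_up c_lo] by blast
  qed
qed

lemma dominated_linear_graph_extend:
  assumes p: "sublinear p" and H: "dominated_linear_graph p H"
  shows "\<exists>H'. dominated_linear_graph p H' \<and> H \<subseteq> H' \<and> (\<exists>r. (z, r) \<in> H')"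
proof (cases "\<exists>r. (z, r) \<in> H")
  case True
  with H show ?thesis by blast
next
  case False
  have sep: "r' - p (x' - z) \<le> p (x + z) - r" if "(x, r) \<in> H" "(x', r') \<in> H" for x r x' r'
  proof -
    have "r + r' \<le> p (x + x')"
      by (rule dominated_linear_graphD(5)[OF H dominated_linear_graphD(2)[OF H that]])
    also have "\<dots> \<le> p (x + z) + p (x' - z)"
      using sublinear_add[OF p, of "x + z" "x' - z"] by simp
    finally show ?thesis by simp
  qed
  define c where "c = Inf {p (x + z) - r | x r. (x, r) \<in> H}"
  have ne: "{p (x + z) - r | x r. (x, r) \<in> H} \<noteq> {}"
    using dominated_linear_graphD(1)[OF H] by blast
  have bdd: "bdd_below {p (x + z) - r | x r. (x, r) \<in> H}"
    using sep[OF _ dominated_linear_graphD(1)[OF H]] by (auto intro!: bdd_belowI)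
  have "c \<le> p (x + z) - r" if "(x, r) \<in> H" for x r
    unfolding c_def by (rule cInf_lower[OF _ bdd]) (use that in blast)
  moreover have "r - p (x - z) \<le> c" if "(x, r) \<in> H" for x r
    unfolding c_def by (rule cInf_greatest[OF ne]) (use sep that in blast)
  ultimately have "dominated_linear_graph p {(x + t *\<^sub>R z, r + t * c) | x r t. (x, r) \<in> H}"
    using dominated_linear_graph_extend_by[OF p H False] by blast
  moreover have "H \<subseteq> {(x + t *\<^sub>R z, r + t * c) | x r t. (x, r) \<in> H}"
    by force
  moreover have "(z, c) \<in> {(x + t *\<^sub>R z, r + t * c) | x r t. (x, r) \<in> H}"
    using dominated_linear_graphD(1)[OF H] by force
  ultimately show ?thesis by blast
qed

theorem hahn_banach_sublinear:
  fixes p :: "'a::real_vector \<Rightarrow> real"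
  assumes p: "sublinear p"
  shows "\<exists>F. linear F \<and> (\<forall>x. F x \<le> p x) \<and> F y = p y"
proof -
  define L where "L = range (\<lambda>t. (t *\<^sub>R y, t * p y))"
  define A where "A = {H. dominated_linear_graph p H \<and> L \<subseteq> H}"
  have "\<exists>M\<in>A. \<forall>H\<in>A. M \<subseteq> H \<longrightarrow> H = M"
  proof (rule subset_Zorn_nonempty)
    show "A \<noteq> {}"
      using dominated_linear_graph_line[OF p, of y] by (auto simp: A_def L_def)
  next
    fix C assume "C \<noteq> {}" and chain: "subset.chain A C"
    then have "\<And>H. H \<in> C \<Longrightarrow> H \<in> A"
      by (auto simp: subset.chain_def)
    then have "dominated_linear_graph p (\<Union>C)" "L \<subseteq> \<Union>C"
      using dominated_linear_graph_Union_chain[OF \<open>C \<noteq> {}\<close> _ chain] \<open>C \<noteq> {}\<close>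
      by (auto simp: A_def)
    then show "\<Union>C \<in> A"
      by (simp add: A_def)
  qed
  then obtain M where "M \<in> A" and maximal_A: "\<And>H. H \<in> A \<Longrightarrow> M \<subseteq> H \<Longrightarrow> H = M"
    by blast
  then have M: "dominated_linear_graph p M" "L \<subseteq> M"
    by (simp_all add: A_def)
  have maximal: "H = M" if "dominated_linear_graph p H" "M \<subseteq> H" for H
    using that M(2) by (intro maximal_A) (auto simp: A_def)
  have total: "\<exists>r. (x, r) \<in> M" for x
    using dominated_linear_graph_extend[OF p M(1), of x] maximal by blast
  define F where "F x = (THE r. (x, r) \<in> M)" for x
  have F_eq: "F x = r" if "(x, r) \<in> M" for x r
    unfolding F_def using that dominated_linear_graph_unique[OF M(1)] by blast
  have F_mem: "(x, F x) \<in> M" for x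
    using total[of x] F_eq by blast
  have "linear F"
  proof (rule linearI)
    show "F (x + x') = F x + F x'" for x x'
      using F_eq dominated_linear_graphD(2)[OF M(1) F_mem F_mem] .
    show "F (c *\<^sub>R x) = c *\<^sub>R F x" for c x
      using F_eq dominated_linear_graphD(3)[OF M(1) F_mem] by simp
  qed
  moreover have "F x \<le> p x" for x
    using dominated_linear_graphD(5)[OF M(1) F_mem] .
  moreover have "(y, p y) \<in> L"
    using rangeI[of "\<lambda>t. (t *\<^sub>R y, t * p y)" 1] by (simp add: L_def)
  then have "F y = p y"
    using M(2) F_eq by blast
  ultimately show ?thesis by blast
qed

lemma exists_norming_functional:
  fixes x :: "'a::real_normed_vector"
  shows "\<exists>f::'a \<Rightarrow>\<^sub>L real. norm f \<le> 1 \<and> blinfun_apply f x = norm x"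
proof -
  have "sublinear (norm :: 'a \<Rightarrow> real)"
    by (simp add: sublinear_def norm_triangle_ineq)
  then obtain F where F: "linear F" "\<And>v. F v \<le> norm v" "F x = norm x"
    using hahn_banach_sublinear by blast
  have bound: "\<bar>F v\<bar> \<le> norm v" for v
    using F(2)[of v] F(2)[of "- v"] linear_neg[OF F(1), of v] by auto
  then have "bounded_linear F"
    using F(1) by (auto intro!: bounded_linear_intro[where K = 1] simp: linear_add linear_scale)
  moreover have "norm (Blinfun F) \<le> 1"
    using bound \<open>bounded_linear F\<close> by (intro norm_blinfun_bound) (auto simp: bounded_linear_Blinfun_apply)
  ultimately show ?thesis
    using F(3) by (auto simp: bounded_linear_Blinfun_apply)
qed

section \<open>The projective tensor product\<close>

abbreviation rep_cost :: "(nat \<Rightarrow> 'e::real_normed_vector) \<Rightarrow> (nat \<Rightarrow> ('x::real_normed_vector \<Rightarrow>\<^sub>L real)) \<Rightarrow> real"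
  where "rep_cost a f \<equiv> \<Sum>i. norm (a i) * norm (f i)"

lemma bounded_bilinear_eval:
  fixes T :: "'e::real_normed_vector \<Rightarrow>\<^sub>L 'x::real_normed_vector"
  shows "bounded_bilinear (\<lambda>a (f::'x \<Rightarrow>\<^sub>L real). blinfun_apply f (blinfun_apply T a))"
  using bounded_bilinear.comp1[OF bounded_bilinear.flip[OF bounded_bilinear_blinfun_apply]
      blinfun.bounded_linear_right[of T]]
  by simp

lemma summable_bilinear_rep:
  fixes B :: "'e::real_normed_vector \<Rightarrow> ('x::real_normed_vector \<Rightarrow>\<^sub>L real) \<Rightarrow> real"
  assumes B: "bounded_bilinear B" and "rep_ok a f"
  shows "summable (\<lambda>i. B (a i) (f i))"
proof -
  obtain K where K: "\<And>x y. norm (B x y) \<le> norm x * norm y * K"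
    using bounded_bilinear.bounded[OF B] by blast
  have "summable (\<lambda>i. norm (a i) * norm (f i) * K)"
    using \<open>rep_ok a f\<close> unfolding rep_ok_def by (rule summable_mult2)
  then show ?thesis
    by (rule summable_comparison_test'[where N = 0]) (use K in \<open>auto simp: mult.assoc\<close>)
qed

lemma tens_eval_tens_rep:
  "tens_eval (tens_rep a f) T = (\<Sum>i. blinfun_apply (f i) (blinfun_apply T (a i)))"
  by (simp add: tens_eval_def tens_rep_def bounded_bilinear_eval)

lemma abs_tens_eval_tens_rep_le:
  assumes "rep_ok a f"
  shows "\<bar>tens_eval (tens_rep a f) T\<bar> \<le> rep_cost a f * norm T"
proof -
  let ?g = "\<lambda>i. blinfun_apply (f i) (blinfun_apply T (a i))"
  have bound: "\<bar>?g i\<bar> \<le> norm (a i) * norm (f i) * norm T" for i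
  proof -
    have "\<bar>?g i\<bar> \<le> norm (f i) * norm (blinfun_apply T (a i))"
      using norm_blinfun[of "f i"] by simp
    also have "\<dots> \<le> norm (f i) * (norm T * norm (a i))"
      by (intro mult_left_mono norm_blinfun) auto
    finally show ?thesis by (simp add: algebra_simps)
  qed
  have summable: "summable (\<lambda>i. norm (a i) * norm (f i) * norm T)"
    using assms unfolding rep_ok_def by (rule summable_mult2)
  have abs_summable: "summable (\<lambda>i. \<bar>?g i\<bar>)"
    by (rule summable_comparison_test'[OF summable, where N = 0]) (simp add: bound)
  have "\<bar>suminf ?g\<bar> \<le> (\<Sum>i. norm (a i) * norm (f i) * norm T)"
    using summable_rabs[OF abs_summable] suminf_le[OF bound abs_summable summable] by linarith
  also have "\<dots> = rep_cost a f * norm T"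
    using assms unfolding rep_ok_def by (rule suminf_mult2[symmetric])
  finally show ?thesis
    by (simp add: tens_eval_tens_rep)
qed

definition interleave :: "(nat \<Rightarrow> 'a) \<Rightarrow> (nat \<Rightarrow> 'a) \<Rightarrow> nat \<Rightarrow> 'a" where
  "interleave g h j = (if even j then g (j div 2) else h (j div 2))"

lemma interleave_map2:
  "F (interleave a b j) (interleave f g j) = interleave (\<lambda>i. F (a i) (f i)) (\<lambda>i. F (b i) (g i)) j"
  by (simp add: interleave_def)

lemma sums_interleave:
  fixes g h :: "nat \<Rightarrow> 'a::real_normed_vector"
  assumes "g sums s" and "h sums t"
  shows "interleave g h sums (s + t)"
proof -
  have "(\<lambda>n. (\<lambda>j. if even j then g (j div 2) else 0) (2 * n)) sums s"
    using assms(1) by simp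
  then have "(\<lambda>j. if even j then g (j div 2) else 0) sums s"
    by (subst (asm) sums_mono_reindex) (auto simp: strict_mono_def elim!: evenE)
  moreover have "(\<lambda>n. (\<lambda>j. if even j then 0 else h (j div 2)) (2 * n + 1)) sums t"
    using assms(2) by simp
  then have "(\<lambda>j. if even j then 0 else h (j div 2)) sums t"
    by (subst (asm) sums_mono_reindex) (auto simp: strict_mono_def elim!: oddE)
  ultimately have "(\<lambda>j. (if even j then g (j div 2) else 0) + (if even j then 0 else h (j div 2))) sums (s + t)"
    by (rule sums_add)
  moreover have "interleave g h = (\<lambda>j. (if even j then g (j div 2) else 0) + (if even j then 0 else h (j div 2)))"
    by (simp add: fun_eq_iff interleave_def)
  ultimately show ?thesis
    by simp
qed

lemma interleave_rep:
  assumes "rep_ok a f" and "rep_ok b g"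
  shows "rep_ok (interleave (\<lambda>i. c *\<^sub>R a i) b) (interleave f g)"
    and "rep_cost (interleave (\<lambda>i. c *\<^sub>R a i) b) (interleave f g) = \<bar>c\<bar> * rep_cost a f + rep_cost b g"
    and "tens_rep (interleave (\<lambda>i. c *\<^sub>R a i) b) (interleave f g) = (\<lambda>B. c * tens_rep a f B + tens_rep b g B)"
proof -
  have "(\<lambda>i. norm (c *\<^sub>R a i) * norm (f i)) sums (\<bar>c\<bar> * rep_cost a f)"
    using sums_mult[OF summable_sums[OF assms(1)[unfolded rep_ok_def]], of "\<bar>c\<bar>"]
    by (simp add: mult.assoc)
  from sums_interleave[OF this summable_sums[OF assms(2)[unfolded rep_ok_def]]]
  have cost: "(\<lambda>j. norm (interleave (\<lambda>i. c *\<^sub>R a i) b j) * norm (interleave f g j))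
      sums (\<bar>c\<bar> * rep_cost a f + rep_cost b g)"
    by (simp add: interleave_map2[of "\<lambda>x y. norm x * norm y"])
  then show "rep_ok (interleave (\<lambda>i. c *\<^sub>R a i) b) (interleave f g)"
    unfolding rep_ok_def by (rule sums_summable)
  from cost show "rep_cost (interleave (\<lambda>i. c *\<^sub>R a i) b) (interleave f g) = \<bar>c\<bar> * rep_cost a f + rep_cost b g"
    by (rule sums_unique[symmetric])
  show "tens_rep (interleave (\<lambda>i. c *\<^sub>R a i) b) (interleave f g) = (\<lambda>B. c * tens_rep a f B + tens_rep b g B)"
  proof
    fix B :: "'a \<Rightarrow> ('b \<Rightarrow>\<^sub>L real) \<Rightarrow> real"
    show "tens_rep (interleave (\<lambda>i. c *\<^sub>R a i) b) (interleave f g) B = c * tens_rep a f B + tens_rep b g B"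
    proof (cases "bounded_bilinear B")
      case True
      have "(\<lambda>i. B (c *\<^sub>R a i) (f i)) sums (c * (\<Sum>i. B (a i) (f i)))"
        using sums_mult[OF summable_sums[OF summable_bilinear_rep[OF True assms(1)]], of c]
        by (simp add: bounded_bilinear.scaleR_left[OF True])
      from sums_interleave[OF this summable_sums[OF summable_bilinear_rep[OF True assms(2)]]]
      show ?thesis
        using True by (simp add: tens_rep_def interleave_map2[of B] sums_iff)
    qed (simp add: tens_rep_def)
  qed
qed

lemma proj_tensorI: "rep_ok a f \<Longrightarrow> tens_rep a f \<in> proj_tensor"
  by (auto simp: proj_tensor_def)

lemma proj_norm_le_rep_cost:
  assumes "rep_ok a f"
  shows "proj_norm (tens_rep a f) \<le> rep_cost a f"
  unfolding proj_norm_def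
  by (rule cInf_lower) (use assms in \<open>auto intro!: bdd_belowI[of _ 0] suminf_nonneg simp: rep_ok_def\<close>)

lemma proj_norm_nonneg:
  assumes "u \<in> proj_tensor"
  shows "0 \<le> proj_norm u"
  unfolding proj_norm_def
  by (rule cInf_greatest) (use assms in \<open>auto intro!: suminf_nonneg simp: rep_ok_def proj_tensor_def\<close>)

lemma proj_norm_greatest:
  assumes "u \<in> proj_tensor" and "0 \<le> K"
    and bound: "\<And>a f. rep_ok a f \<Longrightarrow> tens_rep a f = u \<Longrightarrow> x \<le> rep_cost a f * K"
  shows "x \<le> proj_norm u * K"
proof (cases "K = 0")
  case True
  obtain a f where "rep_ok a f" "tens_rep a f = u"
    using assms(1) by (auto simp: proj_tensor_def)
  with bound True show ?thesis by fastforce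
next
  case False
  with \<open>0 \<le> K\<close> have "0 < K" by simp
  have "x / K \<le> proj_norm u"
    unfolding proj_norm_def
  proof (rule cInf_greatest)
    show "{rep_cost a f | a f. rep_ok a f \<and> tens_rep a f = u} \<noteq> {}"
      using assms(1) by (auto simp: proj_tensor_def)
  next
    fix s assume "s \<in> {rep_cost a f | a f. rep_ok a f \<and> tens_rep a f = u}"
    then obtain a f where "rep_ok a f" "tens_rep a f = u" "s = rep_cost a f"
      by blast
    with bound \<open>0 < K\<close> show "x / K \<le> s"
      by (simp add: pos_divide_le_eq)
  qed
  with \<open>0 < K\<close> show ?thesis
    by (simp add: pos_divide_le_eq)
qed

lemma proj_tensor_lincomb:
  assumes "u \<in> proj_tensor" and "v \<in> proj_tensor"
  shows "(\<lambda>B. c * u B + v B) \<in> proj_tensor"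
    and "proj_norm (\<lambda>B. c * u B + v B) \<le> \<bar>c\<bar> * proj_norm u + proj_norm v"
proof -
  obtain a f b g where af: "rep_ok a f" "u = tens_rep a f" and bg: "rep_ok b g" "v = tens_rep b g"
    using assms by (auto simp: proj_tensor_def)
  then show "(\<lambda>B. c * u B + v B) \<in> proj_tensor"
    using proj_tensorI[OF interleave_rep(1)[OF af(1) bg(1), of c]]
    by (simp add: interleave_rep(3)[OF af(1) bg(1)] af(2) bg(2))
  have "proj_norm (\<lambda>B. c * u B + v B) - rep_cost b g \<le> proj_norm u * \<bar>c\<bar>"
    if bg: "rep_ok b g" "tens_rep b g = v" for b g
  proof (rule proj_norm_greatest[OF assms(1) abs_ge_zero])
    fix a f assume af: "rep_ok a f" "tens_rep a f = u"
    have "proj_norm (\<lambda>B. c * u B + v B) \<le> \<bar>c\<bar> * rep_cost a f + rep_cost b g"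
      using proj_norm_le_rep_cost[OF interleave_rep(1)[OF af(1) bg(1)]] interleave_rep(2,3)[OF af(1) bg(1)]
      by (simp add: af bg)
    then show "proj_norm (\<lambda>B. c * u B + v B) - rep_cost b g \<le> rep_cost a f * \<bar>c\<bar>"
      by (simp add: mult.commute)
  qed
  note step = this
  have "proj_norm (\<lambda>B. c * u B + v B) - \<bar>c\<bar> * proj_norm u \<le> proj_norm v * 1"
  proof (rule proj_norm_greatest[OF assms(2) zero_le_one])
    fix b g assume "rep_ok b g" "tens_rep b g = v"
    from step[OF this] show "proj_norm (\<lambda>B. c * u B + v B) - \<bar>c\<bar> * proj_norm u \<le> rep_cost b g * 1"
      by (simp add: mult.commute)
  qed
  then show "proj_norm (\<lambda>B. c * u B + v B) \<le> \<bar>c\<bar> * proj_norm u + proj_norm v"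
    by simp
qed

lemma zero_rep:
  "rep_ok (\<lambda>_. 0) (\<lambda>_. 0)" "tens_rep (\<lambda>_. 0) (\<lambda>_. 0) = (\<lambda>B. 0)" "rep_cost (\<lambda>_. 0) (\<lambda>_. 0) = 0"
  by (auto simp: rep_ok_def tens_rep_def bounded_bilinear.zero_left)

lemma proj_tensor_zero: "(\<lambda>B. 0) \<in> proj_tensor"
  using proj_tensorI[OF zero_rep(1)] unfolding zero_rep(2) .

lemma proj_norm_zero: "proj_norm (\<lambda>B. 0) = 0"
proof (rule antisym)
  show "proj_norm (\<lambda>B. 0) \<le> 0"
    using proj_norm_le_rep_cost[OF zero_rep(1)] unfolding zero_rep(2,3) .
  show "0 \<le> proj_norm (\<lambda>B. 0)"
    by (rule proj_norm_nonneg[OF proj_tensor_zero])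
qed

lemma abs_tens_eval_le:
  assumes "u \<in> proj_tensor"
  shows "\<bar>tens_eval u T\<bar> \<le> proj_norm u * norm T"
  using assms norm_ge_zero by (rule proj_norm_greatest) (use abs_tens_eval_tens_rep_le in blast)

lemma tens_eval_lincomb_left: "tens_eval (\<lambda>B. c * u B + v B) T = c * tens_eval u T + tens_eval v T"
  by (simp add: tens_eval_def)

lemma tens_eval_diff_left: "tens_eval (\<lambda>B. u B - v B) T = tens_eval u T - tens_eval v T"
  by (simp add: tens_eval_def)

lemma tens_eval_lincomb_right:
  assumes "u \<in> proj_tensor"
  shows "tens_eval u (c *\<^sub>R T + S) = c * tens_eval u T + tens_eval u S"
proof -
  obtain a f where af: "rep_ok a f" "u = tens_rep a f"
    using assms by (auto simp: proj_tensor_def)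
  let ?ev = "\<lambda>T i. blinfun_apply (f i) (blinfun_apply T (a i))"
  have "summable (?ev T)" "summable (?ev S)"
    using summable_bilinear_rep[OF bounded_bilinear_eval af(1)] by auto
  then have "(\<Sum>i. c * ?ev T i + ?ev S i) = c * suminf (?ev T) + suminf (?ev S)"
    by (simp add: suminf_add[symmetric] suminf_mult summable_mult)
  then show ?thesis
    by (simp add: af(2) tens_eval_tens_rep blinfun.add_left blinfun.scaleR_left
        blinfun.add_right blinfun.scaleR_right)
qed

lemma proj_tensor_diff:
  assumes "u \<in> proj_tensor" and "v \<in> proj_tensor"
  shows "(\<lambda>B. u B - v B) \<in> proj_tensor"
  using proj_tensor_lincomb(1)[OF assms(2,1), of "- 1"] by simp

lemma proj_norm_diff_commute:
  assumes "u \<in> proj_tensor" and "v \<in> proj_tensor"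
  shows "proj_norm (\<lambda>B. u B - v B) = proj_norm (\<lambda>B. v B - u B)"
proof -
  have "proj_norm (\<lambda>B. u B - v B) \<le> proj_norm (\<lambda>B. v B - u B)" 
    if "u \<in> proj_tensor" "v \<in> proj_tensor" for u v :: "('a, 'b) ptens"
    using proj_tensor_lincomb(2)[OF proj_tensor_diff[OF that(2,1)] proj_tensor_zero, of "- 1"]
    by (simp add: proj_norm_zero)
  with assms show ?thesis
    by (meson antisym)
qed

lemma proj_norm_diff_triangle:
  assumes "u \<in> proj_tensor" and "v \<in> proj_tensor" and "w \<in> proj_tensor"
  shows "proj_norm (\<lambda>B. u B - w B) \<le> proj_norm (\<lambda>B. u B - v B) + proj_norm (\<lambda>B. v B - w B)"
  using proj_tensor_lincomb(2)[OF proj_tensor_diff[OF assms(1,2)] proj_tensor_diff[OF assms(2,3)], of 1]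
  by simp

lemma FR_zero: "0 \<in> FR"
  by (auto simp: FR_def finite_rank_def intro!: exI[of _ "{}"])

lemma FR_add:
  assumes "T \<in> FR" and "S \<in> FR"
  shows "T + S \<in> FR"
proof -
  obtain B1 B2 where "finite B1" "range (blinfun_apply T) \<subseteq> span B1"
    and "finite B2" "range (blinfun_apply S) \<subseteq> span B2"
    using assms by (auto simp: FR_def finite_rank_def)
  moreover have "span B1 \<subseteq> span (B1 \<union> B2)" "span B2 \<subseteq> span (B1 \<union> B2)"
    by (simp_all add: span_mono)
  ultimately have "range (blinfun_apply (T + S)) \<subseteq> span (B1 \<union> B2)"
    by (auto simp: blinfun.add_left intro!: span_add)
  moreover note \<open>finite B1\<close> \<open>finite B2\<close>
  ultimately show ?thesis
    by (auto simp: FR_def finite_rank_def)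
qed

lemma FR_scaleR:
  assumes "T \<in> FR"
  shows "c *\<^sub>R T \<in> FR"
proof -
  obtain B where "finite B" "range (blinfun_apply T) \<subseteq> span B"
    using assms by (auto simp: FR_def finite_rank_def)
  moreover from this have "range (blinfun_apply (c *\<^sub>R T)) \<subseteq> span B"
    by (auto simp: blinfun.scaleR_left intro!: span_scale)
  ultimately show ?thesis
    by (auto simp: FR_def finite_rank_def)
qed

lemma FR_sum: "finite G \<Longrightarrow> G \<subseteq> FR \<Longrightarrow> (\<Sum>T\<in>G. c T *\<^sub>R T) \<in> FR"
  by (induction G rule: finite_induct) (auto intro!: FR_add FR_scaleR FR_zero)

lemma fin_dualD:
  assumes "\<phi> \<in> fin_dual"
  shows fin_dual_add: "T \<in> FR \<Longrightarrow> S \<in> FR \<Longrightarrow> \<phi> (T + S) = \<phi> T + \<phi> S"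
    and fin_dual_scaleR: "T \<in> FR \<Longrightarrow> \<phi> (c *\<^sub>R T) = c * \<phi> T"
    and fin_dual_bounded: "\<exists>C. \<forall>T\<in>FR. \<bar>\<phi> T\<bar> \<le> C * norm T"
    and fin_dual_outside: "T \<notin> FR \<Longrightarrow> \<phi> T = 0"
  using assms by (auto simp: fin_dual_def)

lemma fin_dual_sum:
  assumes "\<phi> \<in> fin_dual" and "finite G" and "G \<subseteq> FR"
  shows "\<phi> (\<Sum>T\<in>G. c T *\<^sub>R T) = (\<Sum>T\<in>G. c T * \<phi> T)"
  using assms(2,3)
proof (induction G rule: finite_induct)
  case empty
  show ?case
    using fin_dual_scaleR[OF assms(1) FR_zero, of 0] by simp
next
  case (insert T G)
  then show ?case
    by (simp add: fin_dual_add[OF assms(1)] fin_dual_scaleR[OF assms(1)] FR_scaleR FR_sum)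
qed

lemma dual_norm_bdd_above:
  assumes "\<phi> \<in> fin_dual"
  shows "bdd_above {\<bar>\<phi> T\<bar> | T. T \<in> FR \<and> norm T \<le> 1}"
proof -
  obtain C where C: "\<And>T. T \<in> FR \<Longrightarrow> \<bar>\<phi> T\<bar> \<le> C * norm T"
    using fin_dual_bounded[OF assms] by blast
  have "\<bar>\<phi> T\<bar> \<le> \<bar>C\<bar>" if "T \<in> FR" "norm T \<le> 1" for T
  proof -
    have "\<bar>\<phi> T\<bar> \<le> C * norm T"
      by (rule C[OF that(1)])
    also have "\<dots> \<le> \<bar>C\<bar> * norm T"
      by (intro mult_right_mono) auto
    also have "\<dots> \<le> \<bar>C\<bar>"
      using that(2) by (simp add: mult_left_le)
    finally show ?thesis .
  qed
  then show ?thesis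
    by (auto intro!: bdd_aboveI)
qed

lemma dual_norm_nonneg:
  assumes "\<phi> \<in> fin_dual"
  shows "0 \<le> dual_norm \<phi>"
proof -
  have "\<bar>\<phi> 0\<bar> \<in> {\<bar>\<phi> T\<bar> | T. T \<in> FR \<and> norm T \<le> 1}"
    using FR_zero by force
  then show ?thesis
    unfolding dual_norm_def by (rule cSup_upper2[OF _ _ dual_norm_bdd_above[OF assms]]) simp
qed

lemma abs_fin_dual_le:
  assumes "\<phi> \<in> fin_dual" and "T \<in> FR"
  shows "\<bar>\<phi> T\<bar> \<le> dual_norm \<phi> * norm T"
proof (cases "T = 0")
  case True
  then show ?thesis
    using fin_dual_scaleR[OF assms(1) FR_zero, of 0] by simp
next
  case False
  then have "\<bar>\<phi> ((1 / norm T) *\<^sub>R T)\<bar> \<in> {\<bar>\<phi> T\<bar> | T. T \<in> FR \<and> norm T \<le> 1}"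
    using FR_scaleR[OF assms(2)] by force
  then have "\<bar>\<phi> ((1 / norm T) *\<^sub>R T)\<bar> \<le> dual_norm \<phi>"
    unfolding dual_norm_def by (rule cSup_upper[OF _ dual_norm_bdd_above[OF assms(1)]])
  with False show ?thesis
    by (simp add: fin_dual_scaleR[OF assms] abs_mult field_simps)
qed

definition pairs_eval :: "('e::real_normed_vector \<times> ('x::real_normed_vector \<Rightarrow>\<^sub>L real)) list \<Rightarrow> ('e \<Rightarrow>\<^sub>L 'x) \<Rightarrow> real" where
  "pairs_eval ps T = (\<Sum>(a, f)\<leftarrow>ps. blinfun_apply f (blinfun_apply T a))"

definition pairs_cost :: "('e::real_normed_vector \<times> ('x::real_normed_vector \<Rightarrow>\<^sub>L real)) list \<Rightarrow> real" where
  "pairs_cost ps = (\<Sum>(a, f)\<leftarrow>ps. norm a * norm f)"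

definition list_seq :: "'a::zero list \<Rightarrow> nat \<Rightarrow> 'a" where
  "list_seq xs i = (if i < length xs then xs ! i else 0)"

definition pairs_tensor :: "('e::real_normed_vector \<times> ('x::real_normed_vector \<Rightarrow>\<^sub>L real)) list \<Rightarrow> ('e, 'x) ptens" where
  "pairs_tensor ps = tens_rep (list_seq (map fst ps)) (list_seq (map snd ps))"

definition pairs_scale :: "real \<Rightarrow> ('e::real_normed_vector \<times> 'f) list \<Rightarrow> ('e \<times> 'f) list" where
  "pairs_scale c ps = map (\<lambda>(a, f). (c *\<^sub>R a, f)) ps"

lemma sums_list_seq:
  assumes "h 0 0 = 0"
  shows "(\<lambda>i. h (list_seq (map fst ps) i) (list_seq (map snd ps) i)) sums (\<Sum>(a, f)\<leftarrow>ps. h a f)"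
proof -
  have "(\<lambda>i. h (list_seq (map fst ps) i) (list_seq (map snd ps) i))
      sums (\<Sum>i\<in>{..<length ps}. h (list_seq (map fst ps) i) (list_seq (map snd ps) i))"
    by (rule sums_finite) (auto simp: list_seq_def assms)
  also have "(\<Sum>i\<in>{..<length ps}. h (list_seq (map fst ps) i) (list_seq (map snd ps) i))
      = (\<Sum>(a, f)\<leftarrow>ps. h a f)"
    by (simp add: list_seq_def sum_list_sum_nth atLeast0LessThan case_prod_beta)
  finally show ?thesis .
qed

lemma rep_ok_pairs: "rep_ok (list_seq (map fst ps)) (list_seq (map snd ps))"
  unfolding rep_ok_def by (rule sums_summable[OF sums_list_seq[of "\<lambda>a f. norm a * norm f"]]) simp

lemma pairs_tensor_in_proj_tensor: "pairs_tensor ps \<in> proj_tensor"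
  unfolding pairs_tensor_def by (rule proj_tensorI[OF rep_ok_pairs])

lemma proj_norm_pairs_tensor_le: "proj_norm (pairs_tensor ps) \<le> pairs_cost ps"
  using proj_norm_le_rep_cost[OF rep_ok_pairs, of ps] sums_list_seq[of "\<lambda>a f. norm a * norm f" ps]
  by (simp add: pairs_tensor_def pairs_cost_def sums_iff)

lemma tens_eval_pairs_tensor: "tens_eval (pairs_tensor ps) T = pairs_eval ps T"
  using sums_list_seq[of "\<lambda>a f. blinfun_apply f (blinfun_apply T a)" ps]
  by (simp add: pairs_tensor_def pairs_eval_def tens_eval_tens_rep sums_iff)

lemma pairs_eval_append: "pairs_eval (ps @ qs) T = pairs_eval ps T + pairs_eval qs T"
  by (simp add: pairs_eval_def)

lemma pairs_cost_append: "pairs_cost (ps @ qs) = pairs_cost ps + pairs_cost qs"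
  by (simp add: pairs_cost_def)

lemma pairs_eval_scale: "pairs_eval (pairs_scale c ps) T = c * pairs_eval ps T"
  by (induction ps) (auto simp: pairs_eval_def pairs_scale_def blinfun.scaleR_right algebra_simps)

lemma pairs_cost_scale: "pairs_cost (pairs_scale c ps) = \<bar>c\<bar> * pairs_cost ps"
  by (induction ps) (auto simp: pairs_cost_def pairs_scale_def algebra_simps)

lemma pairs_cost_nonneg: "0 \<le> pairs_cost ps"
  unfolding pairs_cost_def by (induction ps) auto

section \<open>Helly's lemma\<close>

(* The gauge of Helly's lemma is a function on the space of all real functions on operators,
   to which Hahn-Banach is applied. *)
instantiation "fun" :: (type, real_vector) real_vector
begin

definition scaleR_fun_def: "c *\<^sub>R f = (\<lambda>x. c *\<^sub>R f x)"

instance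
  by standard (simp_all add: fun_eq_iff scaleR_fun_def plus_fun_def algebra_simps)

end

lemma scaleR_fun_apply [simp]: "(c *\<^sub>R f) x = c *\<^sub>R f x"
  by (simp add: scaleR_fun_def)

lemma sum_fun_apply: "sum f A x = (\<Sum>a\<in>A. f a x)"
  by (induction A rule: infinite_finite_induct) auto

definition helly_cost ::
  "('e::real_normed_vector \<Rightarrow>\<^sub>L 'x::real_normed_vector) set \<Rightarrow> real \<Rightarrow> (('e \<Rightarrow>\<^sub>L 'x) \<Rightarrow> real)
    \<Rightarrow> ('e \<times> ('x \<Rightarrow>\<^sub>L real)) list \<Rightarrow> real" where
  "helly_cost G k z ps = pairs_cost ps + k * (\<Sum>T\<in>G. \<bar>z T - pairs_eval ps T\<bar>)"

definition helly_gauge ::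
  "('e::real_normed_vector \<Rightarrow>\<^sub>L 'x::real_normed_vector) set \<Rightarrow> real \<Rightarrow> (('e \<Rightarrow>\<^sub>L 'x) \<Rightarrow> real) \<Rightarrow> real" where
  "helly_gauge G k z = Inf (range (helly_cost G k z))"

context
  fixes G :: "('e::real_normed_vector \<Rightarrow>\<^sub>L 'x::real_normed_vector) set" and k :: real
  assumes k: "0 \<le> k"
begin

lemma helly_gauge_bdd_below: "bdd_below (range (helly_cost G k z))"
  using k pairs_cost_nonneg
  by (auto intro!: bdd_belowI[of _ 0] add_nonneg_nonneg sum_nonneg simp: helly_cost_def)

lemma helly_gauge_le: "helly_gauge G k z \<le> helly_cost G k z ps"
  unfolding helly_gauge_def by (rule cInf_lower[OF rangeI helly_gauge_bdd_below])

lemma helly_gauge_less_iff: "helly_gauge G k z < y \<longleftrightarrow> (\<exists>ps. helly_cost G k z ps < y)"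
  unfolding helly_gauge_def by (simp add: cInf_less_iff[OF _ helly_gauge_bdd_below])

lemma helly_gauge_vanishing: "(\<And>T. T \<in> G \<Longrightarrow> z T = 0) \<Longrightarrow> helly_gauge G k z \<le> 0"
  using helly_gauge_le[of z "[]"] by (simp add: helly_cost_def pairs_cost_def pairs_eval_def)

lemma helly_gauge_elementary:
  "helly_gauge G k (\<lambda>T. blinfun_apply f (blinfun_apply T a)) \<le> norm a * norm f"
  using helly_gauge_le[of "\<lambda>T. blinfun_apply f (blinfun_apply T a)" "[(a, f)]"]
  by (simp add: helly_cost_def pairs_cost_def pairs_eval_def)

lemma helly_gauge_add: "helly_gauge G k (z1 + z2) \<le> helly_gauge G k z1 + helly_gauge G k z2"
proof (rule field_le_epsilon)
  fix e :: real assume "0 < e"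
  then obtain ps1 ps2 where ps1: "helly_cost G k z1 ps1 < helly_gauge G k z1 + e / 2"
    and ps2: "helly_cost G k z2 ps2 < helly_gauge G k z2 + e / 2"
    using helly_gauge_less_iff[of z1 "helly_gauge G k z1 + e / 2"]
      helly_gauge_less_iff[of z2 "helly_gauge G k z2 + e / 2"] by auto
  have "(\<Sum>T\<in>G. \<bar>(z1 + z2) T - pairs_eval (ps1 @ ps2) T\<bar>)
      \<le> (\<Sum>T\<in>G. \<bar>z1 T - pairs_eval ps1 T\<bar>) + (\<Sum>T\<in>G. \<bar>z2 T - pairs_eval ps2 T\<bar>)"
    unfolding sum.distrib[symmetric] by (rule sum_mono) (simp add: pairs_eval_append)
  then have "helly_cost G k (z1 + z2) (ps1 @ ps2) \<le> helly_cost G k z1 ps1 + helly_cost G k z2 ps2"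
    using mult_left_mono[OF _ k] by (fastforce simp: helly_cost_def pairs_cost_append distrib_left)
  with helly_gauge_le[of "z1 + z2" "ps1 @ ps2"] ps1 ps2
  show "helly_gauge G k (z1 + z2) \<le> helly_gauge G k z1 + helly_gauge G k z2 + e"
    by linarith
qed

lemma helly_gauge_scaleR_le:
  assumes "0 < c"
  shows "helly_gauge G k (c *\<^sub>R z) \<le> c * helly_gauge G k z"
proof -
  have "helly_gauge G k (c *\<^sub>R z) / c \<le> helly_gauge G k z"
    unfolding helly_gauge_def[of G k z]
  proof (rule cInf_greatest, simp, clarify)
    fix ps
    have "(\<Sum>T\<in>G. \<bar>(c *\<^sub>R z) T - pairs_eval (pairs_scale c ps) T\<bar>) = c * (\<Sum>T\<in>G. \<bar>z T - pairs_eval ps T\<bar>)"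
      using assms by (simp add: sum_distrib_left pairs_eval_scale abs_mult right_diff_distrib[symmetric])
    then have "helly_cost G k (c *\<^sub>R z) (pairs_scale c ps) = c * helly_cost G k z ps"
      using assms by (simp add: helly_cost_def pairs_cost_scale algebra_simps)
    with helly_gauge_le[of "c *\<^sub>R z" "pairs_scale c ps"] assms
    show "helly_gauge G k (c *\<^sub>R z) / c \<le> helly_cost G k z ps"
      by (simp add: divide_le_eq mult.commute)
  qed
  with assms show ?thesis
    by (simp add: divide_le_eq mult.commute)
qed

lemma sublinear_helly_gauge: "sublinear (helly_gauge G k)"
proof -
  have "helly_gauge G k (c *\<^sub>R z) = c * helly_gauge G k z" if "0 < c" for c z
  proof (rule antisym)
    show "helly_gauge G k (c *\<^sub>R z) \<le> c * helly_gauge G k z"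
      using helly_gauge_scaleR_le[OF that] .
    have "helly_gauge G k z \<le> (1 / c) * helly_gauge G k (c *\<^sub>R z)"
      using helly_gauge_scaleR_le[of "1 / c" "c *\<^sub>R z"] that by simp
    with that show "c * helly_gauge G k z \<le> helly_gauge G k (c *\<^sub>R z)"
      by (simp add: field_simps)
  qed
  then show ?thesis
    by (simp add: sublinear_def helly_gauge_add)
qed

end

context
  fixes G :: "('e::real_normed_vector \<Rightarrow>\<^sub>L 'x::real_normed_vector) set" and k :: real
    and F :: "(('e \<Rightarrow>\<^sub>L 'x) \<Rightarrow> real) \<Rightarrow> real"
  assumes G: "finite G" and k: "0 \<le> k"
    and F: "linear F" and F_le: "\<And>z. F z \<le> helly_gauge G k z"
begin

lemma helly_functional_eq_sum: "F z = (\<Sum>T\<in>G. z T * F (\<lambda>T'. of_bool (T' = T)))"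
proof -
  define w where "w = z - (\<Sum>T\<in>G. z T *\<^sub>R (\<lambda>T'. of_bool (T' = T)))"
  have w0: "w T = 0" if "T \<in> G" for T
    using that G by (simp add: w_def sum_fun_apply of_bool_def if_distrib cong: if_cong)
  have "F w \<le> 0"
    by (rule order_trans[OF F_le helly_gauge_vanishing[OF k]]) (rule w0)
  moreover have "F (- w) \<le> 0"
    by (rule order_trans[OF F_le helly_gauge_vanishing[OF k]]) (simp add: w0)
  ultimately have "F w = 0"
    using linear_neg[OF F, of w] by simp
  then show ?thesis
    using F by (simp add: w_def linear_diff linear_sum linear_scale)
qed

lemma norm_helly_operator_le_one: "norm (\<Sum>T\<in>G. F (\<lambda>T'. of_bool (T' = T)) *\<^sub>R T) \<le> 1"
  (is "norm ?S \<le> 1")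
proof (rule norm_blinfun_bound)
  fix a
  obtain f :: "'x \<Rightarrow>\<^sub>L real" where f: "norm f \<le> 1" "blinfun_apply f (blinfun_apply ?S a) = norm (blinfun_apply ?S a)"
    using exists_norming_functional by blast
  have "blinfun_apply f (blinfun_apply ?S a) = F (\<lambda>T. blinfun_apply f (blinfun_apply T a))"
    using helly_functional_eq_sum[of "\<lambda>T. blinfun_apply f (blinfun_apply T a)"]
    by (simp add: blinfun.sum_left blinfun.scaleR_left blinfun.sum_right blinfun.scaleR_right mult.commute)
  also have "\<dots> \<le> norm a * norm f"
    using F_le helly_gauge_elementary[OF k] by (rule order_trans)
  also have "\<dots> \<le> 1 * norm a"
    using f(1) by (simp add: mult_left_le)
  finally show "norm (blinfun_apply ?S a) \<le> 1 * norm a"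
    using f(2) by simp
qed simp

end

theorem helly_approximation:
  assumes \<phi>: "\<phi> \<in> fin_dual" and G: "finite G" "G \<subseteq> FR" and "0 < \<delta>" "0 < \<epsilon>"
  shows "\<exists>ps. pairs_cost ps \<le> dual_norm \<phi> + \<epsilon> \<and> (\<forall>T\<in>G. \<bar>pairs_eval ps T - \<phi> T\<bar> \<le> \<delta>)"
proof -
  define M where "M = dual_norm \<phi>"
  have "0 \<le> M"
    unfolding M_def by (rule dual_norm_nonneg[OF \<phi>])
  \<comment> \<open>error weight: penalised cost below \<open>M + \<epsilon>\<close> forces total error below \<open>\<delta>\<close>\<close>
  define k where "k = (M + \<epsilon>) / \<delta>"
  have k: "0 \<le> k"
    using \<open>0 \<le> M\<close> \<open>0 < \<epsilon>\<close> \<open>0 < \<delta>\<close> by (simp add: k_def)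
  obtain F where F: "linear F" "\<And>z. F z \<le> helly_gauge G k z" "F \<phi> = helly_gauge G k \<phi>"
    using hahn_banach_sublinear[OF sublinear_helly_gauge[OF k]] by blast
  \<comment> \<open>\<open>F\<close> is evaluation at an operator \<open>S\<close> in the span of \<open>G\<close>, of norm at most 1\<close>
  define S where "S = (\<Sum>T\<in>G. F (\<lambda>T'. of_bool (T' = T)) *\<^sub>R T)"
  have "helly_gauge G k \<phi> = \<phi> S"
    using fin_dual_sum[OF \<phi> G] helly_functional_eq_sum[OF G(1) k F(1,2), of \<phi>]
    by (simp add: F(3)[symmetric] S_def mult.commute)
  also have "\<dots> \<le> M * norm S"
    unfolding S_def M_def by (rule order_trans[OF abs_ge_self abs_fin_dual_le[OF \<phi> FR_sum[OF G]]])
  also have "\<dots> \<le> M"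
    using norm_helly_operator_le_one[OF G(1) k F(1,2)] \<open>0 \<le> M\<close> by (simp add: S_def mult_left_le)
  finally have "helly_gauge G k \<phi> < M + \<epsilon>"
    using \<open>0 < \<epsilon>\<close> by linarith
  then obtain ps where "helly_cost G k \<phi> ps < M + \<epsilon>"
    using helly_gauge_less_iff[OF k] by blast
  then have ps: "pairs_cost ps + k * (\<Sum>T\<in>G. \<bar>\<phi> T - pairs_eval ps T\<bar>) < M + \<epsilon>"
    by (simp add: helly_cost_def)
  have err: "0 \<le> (\<Sum>T\<in>G. \<bar>\<phi> T - pairs_eval ps T\<bar>)"
    by (simp add: sum_nonneg)
  have "pairs_cost ps \<le> M + \<epsilon>"
    using ps mult_nonneg_nonneg[OF k err] by linarith
  moreover have "\<bar>pairs_eval ps T - \<phi> T\<bar> \<le> \<delta>" if "T \<in> G" for T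
  proof -
    have "k * (\<Sum>T\<in>G. \<bar>\<phi> T - pairs_eval ps T\<bar>) < M + \<epsilon>"
      using ps pairs_cost_nonneg[of ps] by linarith
    then have "(M + \<epsilon>) * (\<Sum>T\<in>G. \<bar>\<phi> T - pairs_eval ps T\<bar>) < (M + \<epsilon>) * \<delta>"
      using \<open>0 < \<delta>\<close> by (simp add: k_def field_simps)
    then have "(\<Sum>T\<in>G. \<bar>\<phi> T - pairs_eval ps T\<bar>) < \<delta>"
      using \<open>0 \<le> M\<close> \<open>0 < \<epsilon>\<close> by (simp add: mult_less_cancel_left_pos)
    moreover have "\<bar>\<phi> T - pairs_eval ps T\<bar> \<le> (\<Sum>T\<in>G. \<bar>\<phi> T - pairs_eval ps T\<bar>)"
      using G(1) that by (intro member_le_sum) auto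
    ultimately show ?thesis
      by (simp add: abs_minus_commute)
  qed
  ultimately show ?thesis
    unfolding M_def by blast
qed

section \<open>The ultrapower modulo W_0\<close>

lemma bdd_fam_proj_tensor: "\<xi> \<in> bdd_fam \<Longrightarrow> \<xi> \<alpha> \<in> proj_tensor"
  by (simp add: bdd_fam_def)

lemma bdd_fam_bounds:
  assumes "\<xi> \<in> bdd_fam"
  obtains M where "\<And>\<alpha>. \<bar>proj_norm (\<xi> \<alpha>)\<bar> \<le> M" and "\<And>\<alpha> T. \<bar>tens_eval (\<xi> \<alpha>) T\<bar> \<le> M * norm T"
proof -
  obtain M where M: "\<And>\<alpha>. proj_norm (\<xi> \<alpha>) \<le> M"
    using assms by (auto simp: bdd_fam_def)
  show ?thesis
  proof (rule that)
    show "\<bar>proj_norm (\<xi> \<alpha>)\<bar> \<le> M" for \<alpha>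
      using M[of \<alpha>] proj_norm_nonneg[OF bdd_fam_proj_tensor[OF assms]] by simp
    show "\<bar>tens_eval (\<xi> \<alpha>) T\<bar> \<le> M * norm T" for \<alpha> T
      using abs_tens_eval_le[OF bdd_fam_proj_tensor[OF assms], of \<alpha> T] mult_right_mono[OF M norm_ge_zero]
      by (rule order_trans)
  qed
qed

lemma bdd_fam_lincomb:
  assumes "\<xi> \<in> bdd_fam" and "\<eta> \<in> bdd_fam"
  shows "(\<lambda>\<alpha> B. c * \<xi> \<alpha> B + \<eta> \<alpha> B) \<in> bdd_fam"
proof -
  obtain M1 M2 where M1: "\<And>\<alpha>. \<bar>proj_norm (\<xi> \<alpha>)\<bar> \<le> M1" and M2: "\<And>\<alpha>. \<bar>proj_norm (\<eta> \<alpha>)\<bar> \<le> M2"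
    using bdd_fam_bounds[OF assms(1)] bdd_fam_bounds[OF assms(2)] by metis
  have "proj_norm (\<lambda>B. c * \<xi> \<alpha> B + \<eta> \<alpha> B) \<le> \<bar>c\<bar> * M1 + M2" for \<alpha>
  proof -
    have "proj_norm (\<lambda>B. c * \<xi> \<alpha> B + \<eta> \<alpha> B) \<le> \<bar>c\<bar> * proj_norm (\<xi> \<alpha>) + proj_norm (\<eta> \<alpha>)"
      by (rule proj_tensor_lincomb(2)[OF bdd_fam_proj_tensor[OF assms(1)] bdd_fam_proj_tensor[OF assms(2)]])
    also have "\<dots> \<le> \<bar>c\<bar> * M1 + M2"
      using M1[of \<alpha>] M2[of \<alpha>] by (intro add_mono mult_left_mono) (auto dest: abs_le_D1)
    finally show ?thesis .
  qed
  with proj_tensor_lincomb(1)[OF bdd_fam_proj_tensor[OF assms(1)] bdd_fam_proj_tensor[OF assms(2)]]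
  show ?thesis
    unfolding bdd_fam_def by blast
qed

lemma bdd_fam_fam_diff:
  assumes "\<eta> \<in> bdd_fam" and "\<xi> \<in> bdd_fam"
  shows "fam_diff \<eta> \<xi> \<in> bdd_fam"
  using bdd_fam_lincomb[OF assms(2,1), of "- 1"] by (simp add: fam_diff_def)

lemma tens_eval_fam_diff: "tens_eval (fam_diff \<eta> \<xi> \<alpha>) T = tens_eval (\<eta> \<alpha>) T - tens_eval (\<xi> \<alpha>) T"
  by (simp add: fam_diff_def tens_eval_diff_left)

lemma mem_ucls_self:
  assumes "\<xi> \<in> bdd_fam"
  shows "\<xi> \<in> ucls U \<xi>"
proof -
  have "fam_diff \<xi> \<xi> \<alpha> = (\<lambda>B. 0)" for \<alpha>
    by (simp add: fam_diff_def)
  with assms show ?thesis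
    by (simp add: ucls_def proj_norm_zero)
qed

lemma tendsto_proj_norm_fam_diff_commute:
  assumes "\<xi> \<in> bdd_fam" and "\<eta> \<in> bdd_fam"
  shows "((\<lambda>\<alpha>. proj_norm (fam_diff \<xi> \<eta> \<alpha>)) \<longlongrightarrow> 0) F \<longleftrightarrow> ((\<lambda>\<alpha>. proj_norm (fam_diff \<eta> \<xi> \<alpha>)) \<longlongrightarrow> 0) F"
  using proj_norm_diff_commute[OF bdd_fam_proj_tensor[OF assms(1)] bdd_fam_proj_tensor[OF assms(2)]]
  by (simp add: fam_diff_def)

lemma tendsto_proj_norm_fam_diff_trans:
  assumes "\<zeta> \<in> bdd_fam" "\<xi> \<in> bdd_fam" "\<eta> \<in> bdd_fam"
    and "((\<lambda>\<alpha>. proj_norm (fam_diff \<zeta> \<xi> \<alpha>)) \<longlongrightarrow> 0) F"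
    and "((\<lambda>\<alpha>. proj_norm (fam_diff \<xi> \<eta> \<alpha>)) \<longlongrightarrow> 0) F"
  shows "((\<lambda>\<alpha>. proj_norm (fam_diff \<zeta> \<eta> \<alpha>)) \<longlongrightarrow> 0) F"
proof (rule Lim_null_comparison)
  show "((\<lambda>\<alpha>. proj_norm (fam_diff \<zeta> \<xi> \<alpha>) + proj_norm (fam_diff \<xi> \<eta> \<alpha>)) \<longlongrightarrow> 0) F"
    using tendsto_add[OF assms(4,5)] by simp
  have "norm (proj_norm (fam_diff \<zeta> \<eta> \<alpha>)) \<le> proj_norm (fam_diff \<zeta> \<xi> \<alpha>) + proj_norm (fam_diff \<xi> \<eta> \<alpha>)"
    for \<alpha>
    using proj_norm_diff_triangle[OF bdd_fam_proj_tensor[OF assms(1)] bdd_fam_proj_tensor[OF assms(2)]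
        bdd_fam_proj_tensor[OF assms(3)]]
      proj_norm_nonneg[OF bdd_fam_proj_tensor[OF bdd_fam_fam_diff[OF assms(1,3)]]]
    by (simp add: fam_diff_def)
  then show "eventually (\<lambda>\<alpha>. norm (proj_norm (fam_diff \<zeta> \<eta> \<alpha>))
      \<le> proj_norm (fam_diff \<zeta> \<xi> \<alpha>) + proj_norm (fam_diff \<xi> \<eta> \<alpha>)) F"
    by (simp add: always_eventually)
qed

lemma ucls_eq_iff:
  assumes "\<xi> \<in> bdd_fam" and "\<eta> \<in> bdd_fam"
  shows "ucls U \<eta> = ucls U \<xi> \<longleftrightarrow> ((\<lambda>\<alpha>. proj_norm (fam_diff \<eta> \<xi> \<alpha>)) \<longlongrightarrow> 0) U"
proof
  assume "ucls U \<eta> = ucls U \<xi>"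
  then show "((\<lambda>\<alpha>. proj_norm (fam_diff \<eta> \<xi> \<alpha>)) \<longlongrightarrow> 0) U"
    using mem_ucls_self[OF assms(2)] by (auto simp: ucls_def)
next
  assume lim: "((\<lambda>\<alpha>. proj_norm (fam_diff \<eta> \<xi> \<alpha>)) \<longlongrightarrow> 0) U"
  then have lim': "((\<lambda>\<alpha>. proj_norm (fam_diff \<xi> \<eta> \<alpha>)) \<longlongrightarrow> 0) U"
    using tendsto_proj_norm_fam_diff_commute[OF assms] by simp
  show "ucls U \<eta> = ucls U \<xi>"
    using tendsto_proj_norm_fam_diff_trans[OF _ assms(2,1) _ lim]
      tendsto_proj_norm_fam_diff_trans[OF _ assms _ lim']
    by (auto simp: ucls_def)
qed

lemma tendsto_tens_eval_diff:
  assumes "\<xi> \<in> bdd_fam" and "\<eta> \<in> bdd_fam" and "((\<lambda>\<alpha>. proj_norm (fam_diff \<eta> \<xi> \<alpha>)) \<longlongrightarrow> 0) F"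
  shows "((\<lambda>\<alpha>. tens_eval (\<eta> \<alpha>) T - tens_eval (\<xi> \<alpha>) T) \<longlongrightarrow> 0) F"
proof (rule Lim_null_comparison)
  show "((\<lambda>\<alpha>. proj_norm (fam_diff \<eta> \<xi> \<alpha>) * norm T) \<longlongrightarrow> 0) F"
    using tendsto_mult_left_zero[OF assms(3)] .
  show "eventually (\<lambda>\<alpha>. norm (tens_eval (\<eta> \<alpha>) T - tens_eval (\<xi> \<alpha>) T) \<le> proj_norm (fam_diff \<eta> \<xi> \<alpha>) * norm T) F"
    using abs_tens_eval_le[OF bdd_fam_proj_tensor[OF bdd_fam_fam_diff[OF assms(2,1)]]]
    by (simp add: tens_eval_fam_diff always_eventually)
qed

lemma tendsto_tens_eval_ucls_cong:
  assumes "\<xi> \<in> bdd_fam" and "\<eta> \<in> bdd_fam" and "ucls U \<eta> = ucls U \<xi>"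
    and "((\<lambda>\<alpha>. tens_eval (\<xi> \<alpha>) T) \<longlongrightarrow> l) U"
  shows "((\<lambda>\<alpha>. tens_eval (\<eta> \<alpha>) T) \<longlongrightarrow> l) U"
proof -
  have "((\<lambda>\<alpha>. proj_norm (fam_diff \<eta> \<xi> \<alpha>)) \<longlongrightarrow> 0) U"
    using assms(3) ucls_eq_iff[OF assms(1,2)] by simp
  then have "((\<lambda>\<alpha>. tens_eval (\<eta> \<alpha>) T - tens_eval (\<xi> \<alpha>) T) \<longlongrightarrow> 0) U"
    by (rule tendsto_tens_eval_diff[OF assms(1,2)])
  from tendsto_add[OF this assms(4)] show ?thesis
    by simp
qed

lemma ucls_in_W0_iff:
  assumes "\<zeta> \<in> bdd_fam"
  shows "ucls U \<zeta> \<in> W0 U \<longleftrightarrow> (\<forall>T\<in>FR. ((\<lambda>\<alpha>. tens_eval (\<zeta> \<alpha>) T) \<longlongrightarrow> 0) U)"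
  using tendsto_tens_eval_ucls_cong[OF _ assms] assms by (auto simp: W0_def)

definition dual_coset :: "'i filter \<Rightarrow> (('e::real_normed_vector \<Rightarrow>\<^sub>L 'x::real_normed_vector) \<Rightarrow> real) \<Rightarrow> (('i \<Rightarrow> ('e, 'x) ptens) set) set" where
  "dual_coset U \<phi> = {ucls U \<eta> | \<eta>. \<eta> \<in> bdd_fam \<and> (\<forall>T\<in>FR. ((\<lambda>\<alpha>. tens_eval (\<eta> \<alpha>) T) \<longlongrightarrow> \<phi> T) U)}"

lemma dual_coset_cong: "(\<And>T. T \<in> FR \<Longrightarrow> \<phi> T = \<psi> T) \<Longrightarrow> dual_coset U \<phi> = dual_coset U \<psi>"
  by (simp add: dual_coset_def)

lemma mem_dual_coset_iff:
  assumes "\<eta> \<in> bdd_fam"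
  shows "ucls U \<eta> \<in> dual_coset U \<phi> \<longleftrightarrow> (\<forall>T\<in>FR. ((\<lambda>\<alpha>. tens_eval (\<eta> \<alpha>) T) \<longlongrightarrow> \<phi> T) U)"
  using tendsto_tens_eval_ucls_cong[OF _ assms] assms by (auto simp: dual_coset_def)

context
  fixes U :: "'i filter"
  assumes U: "ultrafilter U"
begin

lemma tendsto_Lim_tens_eval:
  assumes "\<xi> \<in> bdd_fam"
  shows "((\<lambda>\<alpha>. tens_eval (\<xi> \<alpha>) T) \<longlongrightarrow> Lim U (\<lambda>\<alpha>. tens_eval (\<xi> \<alpha>) T)) U"
  using bdd_fam_bounds[OF assms] by (metis ultrafilter_tendsto_Lim_real[OF U])

lemma tendsto_Lim_proj_norm:
  assumes "\<xi> \<in> bdd_fam"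
  shows "((\<lambda>\<alpha>. proj_norm (\<xi> \<alpha>)) \<longlongrightarrow> Lim U (\<lambda>\<alpha>. proj_norm (\<xi> \<alpha>))) U"
  using bdd_fam_bounds[OF assms] by (metis ultrafilter_tendsto_Lim_real[OF U])

lemma qcls_eq_dual_coset:
  assumes \<xi>: "\<xi> \<in> bdd_fam"
  shows "qcls U \<xi> = dual_coset U (\<lambda>T. Lim U (\<lambda>\<alpha>. tens_eval (\<xi> \<alpha>) T))"
proof -
  have "ucls U (fam_diff \<eta> \<xi>) \<in> W0 U \<longleftrightarrow>
      (\<forall>T\<in>FR. ((\<lambda>\<alpha>. tens_eval (\<eta> \<alpha>) T) \<longlongrightarrow> Lim U (\<lambda>\<alpha>. tens_eval (\<xi> \<alpha>) T)) U)"
    if \<eta>: "\<eta> \<in> bdd_fam" for \<eta>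
  proof -
    have "((\<lambda>\<alpha>. tens_eval (\<eta> \<alpha>) T - tens_eval (\<xi> \<alpha>) T) \<longlongrightarrow> 0) U \<longleftrightarrow>
        ((\<lambda>\<alpha>. tens_eval (\<eta> \<alpha>) T) \<longlongrightarrow> Lim U (\<lambda>\<alpha>. tens_eval (\<xi> \<alpha>) T)) U" for T
      using tendsto_add_const_iff[of "- Lim U (\<lambda>\<alpha>. tens_eval (\<xi> \<alpha>) T)"]
        tendsto_diff[OF _ tendsto_Lim_tens_eval[OF \<xi>, of T]] tendsto_add[OF _ tendsto_Lim_tens_eval[OF \<xi>, of T]]
      by fastforce
    then show ?thesis
      by (simp add: ucls_in_W0_iff[OF bdd_fam_fam_diff[OF \<eta> \<xi>]] tens_eval_fam_diff)
  qed
  then show ?thesis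
    unfolding qcls_def dual_coset_def by blast
qed

lemma dual_coset_eqD:
  assumes "\<xi> \<in> bdd_fam" and "\<forall>T\<in>FR. ((\<lambda>\<alpha>. tens_eval (\<xi> \<alpha>) T) \<longlongrightarrow> \<phi> T) U"
    and "dual_coset U \<phi> = dual_coset U \<psi>" and "T \<in> FR"
  shows "\<phi> T = \<psi> T"
proof -
  have "ucls U \<xi> \<in> dual_coset U \<psi>"
    using assms(1,2,3) mem_dual_coset_iff[OF assms(1)] by blast
  then have "((\<lambda>\<alpha>. tens_eval (\<xi> \<alpha>) T) \<longlongrightarrow> \<psi> T) U"
    using mem_dual_coset_iff[OF assms(1)] assms(4) by blast
  with assms(2,4) show ?thesis
    using tendsto_unique[OF ultrafilter_neq_bot[OF U]] by blast
qed

lemma fin_dual_Lim_tens_eval: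
  assumes \<xi>: "\<xi> \<in> bdd_fam"
  shows "(\<lambda>T. if T \<in> FR then Lim U (\<lambda>\<alpha>. tens_eval (\<xi> \<alpha>) T) else 0) \<in> fin_dual"
proof -
  let ?L = "\<lambda>T. Lim U (\<lambda>\<alpha>. tens_eval (\<xi> \<alpha>) T)"
  have lincomb: "?L (c *\<^sub>R T + S) = c * ?L T + ?L S" for c T S
  proof -
    have "((\<lambda>\<alpha>. tens_eval (\<xi> \<alpha>) (c *\<^sub>R T + S)) \<longlongrightarrow> c * ?L T + ?L S) U"
      using tendsto_add[OF tendsto_mult_left[OF tendsto_Lim_tens_eval[OF \<xi>]] tendsto_Lim_tens_eval[OF \<xi>]]
      by (simp add: tens_eval_lincomb_right[OF bdd_fam_proj_tensor[OF \<xi>]])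
    with tendsto_Lim_tens_eval[OF \<xi>] show ?thesis
      using tendsto_unique[OF ultrafilter_neq_bot[OF U]] by blast
  qed
  obtain M where M: "\<And>\<alpha> T. \<bar>tens_eval (\<xi> \<alpha>) T\<bar> \<le> M * norm T"
    using bdd_fam_bounds[OF \<xi>] by metis
  have "\<bar>?L T\<bar> \<le> M * norm T" for T
    using M by (intro tendsto_upperbound[OF tendsto_rabs[OF tendsto_Lim_tens_eval[OF \<xi>]] _ ultrafilter_neq_bot[OF U]])
      (simp add: always_eventually)
  then show ?thesis
    using lincomb[of 1] lincomb[of _ _ 0] lincomb[of 1 0 0]
    by (auto simp: fin_dual_def intro: FR_add FR_scaleR)
qed

lemma dual_norm_le_Lim_proj_norm:
  assumes \<eta>: "\<eta> \<in> bdd_fam" and lim: "\<forall>T\<in>FR. ((\<lambda>\<alpha>. tens_eval (\<eta> \<alpha>) T) \<longlongrightarrow> \<phi> T) U"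
  shows "dual_norm \<phi> \<le> Lim U (\<lambda>\<alpha>. proj_norm (\<eta> \<alpha>))"
  unfolding dual_norm_def
proof (rule cSup_least)
  show "{\<bar>\<phi> T\<bar> | T. T \<in> FR \<and> norm T \<le> 1} \<noteq> {}"
    using FR_zero by force
next
  fix d assume "d \<in> {\<bar>\<phi> T\<bar> | T. T \<in> FR \<and> norm T \<le> 1}"
  then obtain T where T: "d = \<bar>\<phi> T\<bar>" "T \<in> FR" "norm T \<le> 1"
    by blast
  have "\<bar>tens_eval (\<eta> \<alpha>) T\<bar> \<le> proj_norm (\<eta> \<alpha>)" for \<alpha>
    using abs_tens_eval_le[OF bdd_fam_proj_tensor[OF \<eta>], of \<alpha> T]
      mult_left_le[OF T(3) proj_norm_nonneg[OF bdd_fam_proj_tensor[OF \<eta>, of \<alpha>]]]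
    by linarith
  then show "d \<le> Lim U (\<lambda>\<alpha>. proj_norm (\<eta> \<alpha>))"
    unfolding T(1)
    by (intro tendsto_le[OF ultrafilter_neq_bot[OF U] tendsto_Lim_proj_norm[OF \<eta>]
          tendsto_rabs[OF lim[rule_format, OF T(2)]]])
      (simp add: always_eventually)
qed

end

(* The cap min r 1 keeps the family bounded uniformly in the index; indices that are not a
   finite set of finite-rank operators with a positive tolerance get the empty tensor. *)
definition approx_pairs ::
  "(('e::real_normed_vector \<Rightarrow>\<^sub>L 'x::real_normed_vector) \<Rightarrow> real) \<Rightarrow> ('e \<Rightarrow>\<^sub>L 'x) set \<Rightarrow> real \<Rightarrow> ('e \<times> ('x \<Rightarrow>\<^sub>L real)) list" where
  "approx_pairs \<phi> G r = (if \<phi> \<in> fin_dual \<and> finite G \<and> G \<subseteq> FR \<and> 0 < r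
     then SOME ps. pairs_cost ps \<le> dual_norm \<phi> + min r 1 \<and> (\<forall>T\<in>G. \<bar>pairs_eval ps T - \<phi> T\<bar> \<le> r)
     else [])"

lemma approx_pairs:
  assumes "\<phi> \<in> fin_dual" "finite G" "G \<subseteq> FR" "0 < r"
  shows "pairs_cost (approx_pairs \<phi> G r) \<le> dual_norm \<phi> + min r 1"
    and "\<forall>T\<in>G. \<bar>pairs_eval (approx_pairs \<phi> G r) T - \<phi> T\<bar> \<le> r"
proof -
  have ex: "\<exists>ps. pairs_cost ps \<le> dual_norm \<phi> + min r 1 \<and> (\<forall>T\<in>G. \<bar>pairs_eval ps T - \<phi> T\<bar> \<le> r)"
    using assms by (intro helly_approximation) auto
  have eq: "approx_pairs \<phi> G r
      = (SOME ps. pairs_cost ps \<le> dual_norm \<phi> + min r 1 \<and> (\<forall>T\<in>G. \<bar>pairs_eval ps T - \<phi> T\<bar> \<le> r))"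
    using assms by (simp add: approx_pairs_def)
  have "pairs_cost (approx_pairs \<phi> G r) \<le> dual_norm \<phi> + min r 1
      \<and> (\<forall>T\<in>G. \<bar>pairs_eval (approx_pairs \<phi> G r) T - \<phi> T\<bar> \<le> r)"
    unfolding eq by (rule someI_ex[OF ex])
  then show "pairs_cost (approx_pairs \<phi> G r) \<le> dual_norm \<phi> + min r 1"
    and "\<forall>T\<in>G. \<bar>pairs_eval (approx_pairs \<phi> G r) T - \<phi> T\<bar> \<le> r"
    by simp_all
qed

lemma pairs_cost_approx_pairs_le:
  assumes "\<phi> \<in> fin_dual"
  shows "pairs_cost (approx_pairs \<phi> G r) \<le> dual_norm \<phi> + 1"
proof (cases "finite G \<and> G \<subseteq> FR \<and> 0 < r")
  case True
  then show ?thesis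
    using approx_pairs(1)[OF assms] by fastforce
next
  case False
  then show ?thesis
    using dual_norm_nonneg[OF assms] by (auto simp: approx_pairs_def pairs_cost_def)
qed

definition approx_family ::
  "('i \<Rightarrow> ('e::real_normed_vector \<Rightarrow>\<^sub>L 'x::real_normed_vector) set \<times> real) \<Rightarrow> (('e \<Rightarrow>\<^sub>L 'x) \<Rightarrow> real) \<Rightarrow> 'i \<Rightarrow> ('e, 'x) ptens" where
  "approx_family idx \<phi> \<alpha> = pairs_tensor (approx_pairs \<phi> (fst (idx \<alpha>)) (snd (idx \<alpha>)))"

lemma approx_family_bdd_fam:
  assumes "\<phi> \<in> fin_dual"
  shows "approx_family idx \<phi> \<in> bdd_fam"
  using order_trans[OF proj_norm_pairs_tensor_le pairs_cost_approx_pairs_le[OF assms]]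
  by (auto simp: bdd_fam_def approx_family_def pairs_tensor_in_proj_tensor)

context
  fixes U :: "'i filter" and idx :: "'i \<Rightarrow> ('e::real_normed_vector \<Rightarrow>\<^sub>L 'x::real_normed_vector) set \<times> real"
  assumes U: "ultrafilter U" and U_le: "U \<le> filtercomap idx (finite_subsets_at_top FR \<times>\<^sub>F at_right 0)"
begin

lemma eventually_approx_index:
  assumes "finite G" "G \<subseteq> FR" "0 < e"
  shows "eventually (\<lambda>\<alpha>. G \<subseteq> fst (idx \<alpha>) \<and> finite (fst (idx \<alpha>)) \<and> fst (idx \<alpha>) \<subseteq> FR
    \<and> 0 < snd (idx \<alpha>) \<and> snd (idx \<alpha>) < e) U"
proof -
  have "eventually (\<lambda>H. G \<subseteq> H \<and> finite H \<and> H \<subseteq> FR) (finite_subsets_at_top FR)"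
    using assms(1,2) by (auto simp: eventually_finite_subsets_at_top)
  moreover have "eventually (\<lambda>r. r \<in> {0<..<e}) (at_right (0::real))"
    using assms(3) by (rule eventually_at_right_real)
  ultimately have "eventually (\<lambda>(H, r). G \<subseteq> H \<and> finite H \<and> H \<subseteq> FR \<and> 0 < r \<and> r < e)
      (finite_subsets_at_top FR \<times>\<^sub>F at_right 0)"
    unfolding eventually_prod_filter by fastforce
  then have "eventually (\<lambda>\<alpha>. case idx \<alpha> of (H, r) \<Rightarrow> G \<subseteq> H \<and> finite H \<and> H \<subseteq> FR \<and> 0 < r \<and> r < e)
      (filtercomap idx (finite_subsets_at_top FR \<times>\<^sub>F at_right 0))"
    by (rule eventually_filtercomapI)
  then show ?thesis
    using U_le by (auto simp: case_prod_beta dest: filter_leD)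
qed

lemma tendsto_approx_family:
  assumes \<phi>: "\<phi> \<in> fin_dual"
  shows "\<forall>T\<in>FR. ((\<lambda>\<alpha>. tens_eval (approx_family idx \<phi> \<alpha>) T) \<longlongrightarrow> \<phi> T) U"
proof (intro ballI tendstoI)
  fix T :: "'e \<Rightarrow>\<^sub>L 'x" and e :: real
  assume "T \<in> FR" "0 < e"
  with eventually_approx_index[of "{T}" e] \<open>T \<in> FR\<close>
  have "eventually (\<lambda>\<alpha>. T \<in> fst (idx \<alpha>) \<and> finite (fst (idx \<alpha>)) \<and> fst (idx \<alpha>) \<subseteq> FR
      \<and> 0 < snd (idx \<alpha>) \<and> snd (idx \<alpha>) < e) U"
    by simp
  then show "eventually (\<lambda>\<alpha>. dist (tens_eval (approx_family idx \<phi> \<alpha>) T) (\<phi> T) < e) U"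
    by (rule eventually_mono)
      (use approx_pairs(2)[OF \<phi>] in \<open>force simp: approx_family_def tens_eval_pairs_tensor dist_real_def\<close>)
qed

lemma eventually_proj_norm_approx_family:
  assumes \<phi>: "\<phi> \<in> fin_dual" and "0 < e"
  shows "eventually (\<lambda>\<alpha>. proj_norm (approx_family idx \<phi> \<alpha>) \<le> dual_norm \<phi> + e) U"
  using eventually_approx_index[of "{}" e] \<open>0 < e\<close>
proof (simp, elim eventually_mono, elim conjE)
  fix \<alpha> assume "finite (fst (idx \<alpha>))" "fst (idx \<alpha>) \<subseteq> FR" "0 < snd (idx \<alpha>)" "snd (idx \<alpha>) < e"
  then have "pairs_cost (approx_pairs \<phi> (fst (idx \<alpha>)) (snd (idx \<alpha>))) \<le> dual_norm \<phi> + e"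
    using approx_pairs(1)[OF \<phi>, of "fst (idx \<alpha>)" "snd (idx \<alpha>)"] by linarith
  then show "proj_norm (approx_family idx \<phi> \<alpha>) \<le> dual_norm \<phi> + e"
    unfolding approx_family_def by (rule order_trans[OF proj_norm_pairs_tensor_le])
qed

lemma dual_coset_eq_qcls:
  assumes \<phi>: "\<phi> \<in> fin_dual"
  shows "dual_coset U \<phi> = qcls U (approx_family idx \<phi>)"
proof -
  have "qcls U (approx_family idx \<phi>) = dual_coset U (\<lambda>T. Lim U (\<lambda>\<alpha>. tens_eval (approx_family idx \<phi> \<alpha>) T))"
    by (rule qcls_eq_dual_coset[OF U approx_family_bdd_fam[OF \<phi>]])
  also have "\<dots> = dual_coset U \<phi>"
    by (rule dual_coset_cong, rule tendsto_Lim[OF ultrafilter_neq_bot[OF U] tendsto_approx_family[OF \<phi>, rule_format]])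
  finally show ?thesis ..
qed

lemma fin_dual_eq_Lim_tens_eval:
  fixes \<phi> :: "('e \<Rightarrow>\<^sub>L 'x) \<Rightarrow> real"
  assumes \<phi>: "\<phi> \<in> fin_dual" and \<xi>: "\<xi> \<in> bdd_fam" and eq: "dual_coset U \<phi> = qcls U \<xi>" and "T \<in> FR"
  shows "\<phi> T = Lim U (\<lambda>\<alpha>. tens_eval (\<xi> \<alpha>) T)"
proof -
  have "dual_coset U \<phi> = dual_coset U (\<lambda>T. Lim U (\<lambda>\<alpha>. tens_eval (\<xi> \<alpha>) T))"
    using eq qcls_eq_dual_coset[OF U \<xi>] by simp
  then show ?thesis
    by (rule dual_coset_eqD[OF U approx_family_bdd_fam[OF \<phi>] tendsto_approx_family[OF \<phi>] _ \<open>T \<in> FR\<close>])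
qed

lemma inj_on_dual_coset: "inj_on (dual_coset U) (fin_dual :: (('e \<Rightarrow>\<^sub>L 'x) \<Rightarrow> real) set)"
proof (rule inj_onI, rule ext)
  fix \<phi> \<psi> :: "('e \<Rightarrow>\<^sub>L 'x) \<Rightarrow> real" and T
  assume \<phi>: "\<phi> \<in> fin_dual" and \<psi>: "\<psi> \<in> fin_dual" and eq: "dual_coset U \<phi> = dual_coset U \<psi>"
  show "\<phi> T = \<psi> T"
  proof (cases "T \<in> FR")
    case True
    with eq show ?thesis
      by (rule dual_coset_eqD[OF U approx_family_bdd_fam[OF \<phi>] tendsto_approx_family[OF \<phi>]])
  next
    case False
    with \<phi> \<psi> show ?thesis
      by (simp add: fin_dual_outside)
  qed
qed

lemma dual_coset_image: "dual_coset U ` fin_dual = (ultra_quot U :: ((('i \<Rightarrow> ('e, 'x) ptens) set) set) set)"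
proof
  show "dual_coset U ` fin_dual \<subseteq> (ultra_quot U :: ((('i \<Rightarrow> ('e, 'x) ptens) set) set) set)"
  proof
    fix C assume "C \<in> dual_coset U ` (fin_dual :: (('e \<Rightarrow>\<^sub>L 'x) \<Rightarrow> real) set)"
    then obtain \<phi> :: "('e \<Rightarrow>\<^sub>L 'x) \<Rightarrow> real" where "\<phi> \<in> fin_dual" "C = dual_coset U \<phi>"
      by blast
    then show "C \<in> ultra_quot U"
      unfolding ultra_quot_def using dual_coset_eq_qcls approx_family_bdd_fam by blast
  qed
next
  show "(ultra_quot U :: ((('i \<Rightarrow> ('e, 'x) ptens) set) set) set) \<subseteq> dual_coset U ` fin_dual"
  proof
    fix C :: "(('i \<Rightarrow> ('e, 'x) ptens) set) set"
    assume "C \<in> ultra_quot U"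
    then obtain \<xi> where \<xi>: "\<xi> \<in> bdd_fam" and C: "C = qcls U \<xi>"
      by (auto simp: ultra_quot_def)
    let ?\<phi> = "\<lambda>T. if T \<in> FR then Lim U (\<lambda>\<alpha>. tens_eval (\<xi> \<alpha>) T) else 0"
    have "C = dual_coset U ?\<phi>"
      unfolding C qcls_eq_dual_coset[OF U \<xi>] by (rule dual_coset_cong) simp
    with fin_dual_Lim_tens_eval[OF U \<xi>] show "C \<in> dual_coset U ` fin_dual"
      by blast
  qed
qed

lemma dual_coset_lincomb:
  fixes \<phi> \<psi> :: "('e \<Rightarrow>\<^sub>L 'x) \<Rightarrow> real"
  assumes "\<phi> \<in> fin_dual" "\<psi> \<in> fin_dual" "\<xi> \<in> bdd_fam" "\<eta> \<in> bdd_fam"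
    and "dual_coset U \<phi> = qcls U \<xi>" "dual_coset U \<psi> = qcls U \<eta>"
  shows "dual_coset U (\<lambda>T. c * \<phi> T + \<psi> T) = qcls U (\<lambda>\<alpha> B. c * \<xi> \<alpha> B + \<eta> \<alpha> B)"
proof -
  have "Lim U (\<lambda>\<alpha>. tens_eval (\<lambda>B. c * \<xi> \<alpha> B + \<eta> \<alpha> B) T) = c * \<phi> T + \<psi> T" if "T \<in> FR" for T
  proof (rule tendsto_Lim[OF ultrafilter_neq_bot[OF U]])
    have "((\<lambda>\<alpha>. c * tens_eval (\<xi> \<alpha>) T + tens_eval (\<eta> \<alpha>) T)
        \<longlongrightarrow> c * Lim U (\<lambda>\<alpha>. tens_eval (\<xi> \<alpha>) T) + Lim U (\<lambda>\<alpha>. tens_eval (\<eta> \<alpha>) T)) U"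
      by (intro tendsto_add tendsto_mult_left tendsto_Lim_tens_eval[OF U assms(3)] tendsto_Lim_tens_eval[OF U assms(4)])
    then show "((\<lambda>\<alpha>. tens_eval (\<lambda>B. c * \<xi> \<alpha> B + \<eta> \<alpha> B) T) \<longlongrightarrow> c * \<phi> T + \<psi> T) U"
      by (simp add: tens_eval_lincomb_left fin_dual_eq_Lim_tens_eval[OF assms(1,3,5) that]
          fin_dual_eq_Lim_tens_eval[OF assms(2,4,6) that])
  qed
  then show ?thesis
    unfolding qcls_eq_dual_coset[OF U bdd_fam_lincomb[OF assms(3,4)]]
    by (intro dual_coset_cong) simp
qed

lemma quot_norm_dual_coset:
  fixes \<phi> :: "('e \<Rightarrow>\<^sub>L 'x) \<Rightarrow> real"
  assumes \<phi>: "\<phi> \<in> fin_dual"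
  shows "quot_norm U (dual_coset U \<phi>) = dual_norm \<phi>"
proof -
  let ?S = "{Lim U (\<lambda>\<alpha>. proj_norm (\<eta> \<alpha>)) | \<eta>. \<eta> \<in> bdd_fam \<and> ucls U \<eta> \<in> dual_coset U \<phi>}"
  let ?\<xi> = "approx_family idx \<phi>"
  have lower: "dual_norm \<phi> \<le> s" if "s \<in> ?S" for s
  proof -
    obtain \<eta> where \<eta>: "\<eta> \<in> bdd_fam" "ucls U \<eta> \<in> dual_coset U \<phi>" "s = Lim U (\<lambda>\<alpha>. proj_norm (\<eta> \<alpha>))"
      using \<open>s \<in> ?S\<close> by blast
    show ?thesis
      unfolding \<eta>(3) using \<eta>(2)
      by (intro dual_norm_le_Lim_proj_norm[OF U \<eta>(1)]) (simp add: mem_dual_coset_iff[OF \<eta>(1)])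
  qed
  have "ucls U ?\<xi> \<in> dual_coset U \<phi>"
    using tendsto_approx_family[OF \<phi>] by (simp add: mem_dual_coset_iff[OF approx_family_bdd_fam[OF \<phi>]])
  then have mem: "Lim U (\<lambda>\<alpha>. proj_norm (?\<xi> \<alpha>)) \<in> ?S"
    using approx_family_bdd_fam[OF \<phi>] by blast
  have "Lim U (\<lambda>\<alpha>. proj_norm (?\<xi> \<alpha>)) \<le> dual_norm \<phi>"
  proof (rule field_le_epsilon)
    fix e :: real assume "0 < e"
    show "Lim U (\<lambda>\<alpha>. proj_norm (?\<xi> \<alpha>)) \<le> dual_norm \<phi> + e"
      by (rule tendsto_upperbound[OF tendsto_Lim_proj_norm[OF U approx_family_bdd_fam[OF \<phi>]]
            eventually_proj_norm_approx_family[OF \<phi> \<open>0 < e\<close>] ultrafilter_neq_bot[OF U]])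
  qed
  moreover have "Inf ?S \<le> Lim U (\<lambda>\<alpha>. proj_norm (?\<xi> \<alpha>))"
    by (rule cInf_lower[OF mem bdd_belowI[OF lower]])
  moreover have "dual_norm \<phi> \<le> Inf ?S"
    using mem lower by (intro cInf_greatest) auto
  ultimately show ?thesis
    by (simp add: quot_norm_def)
qed

theorem isometric_iso_dual_quot_dual_coset:
  "isometric_iso_dual_quot U (dual_coset U :: (('e \<Rightarrow>\<^sub>L 'x) \<Rightarrow> real) \<Rightarrow> _)"
  unfolding isometric_iso_dual_quot_def bij_betw_def
proof (intro conjI ballI allI impI)
  show "inj_on (dual_coset U) (fin_dual :: (('e \<Rightarrow>\<^sub>L 'x) \<Rightarrow> real) set)"
    by (rule inj_on_dual_coset)
  show "dual_coset U ` fin_dual = (ultra_quot U :: ((('i \<Rightarrow> ('e, 'x) ptens) set) set) set)"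
    by (rule dual_coset_image)
qed (simp_all add: dual_coset_lincomb quot_norm_dual_coset)

end

theorem theorem2p2:
  fixes E :: "'e::banach itself" and X :: "'x::banach itself"
  shows "\<exists>(U :: ((('e \<Rightarrow>\<^sub>L 'x) \<Rightarrow> real) set \<times> ('e \<Rightarrow>\<^sub>L 'x) set \<times> real) filter)
             (\<Phi> :: (('e \<Rightarrow>\<^sub>L 'x) \<Rightarrow> real) \<Rightarrow> _).
           ultrafilter U \<and> isometric_iso_dual_quot U \<Phi>"
proof -
  \<comment> \<open>the first component of the index type is not needed\<close>
  have "filtercomap snd (finite_subsets_at_top FR \<times>\<^sub>F at_right 0)
      \<noteq> (bot :: ((('e \<Rightarrow>\<^sub>L 'x) \<Rightarrow> real) set \<times> ('e \<Rightarrow>\<^sub>L 'x) set \<times> real) filter)"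
    by (rule filtercomap_neq_bot_surj) (auto simp: prod_filter_eq_bot surj_def)
  then obtain U :: "((('e \<Rightarrow>\<^sub>L 'x) \<Rightarrow> real) set \<times> ('e \<Rightarrow>\<^sub>L 'x) set \<times> real) filter"
    where "U \<le> filtercomap snd (finite_subsets_at_top FR \<times>\<^sub>F at_right 0)" and "ultrafilter U"
    using exists_ultrafilter_le by blast
  then show ?thesis
    using isometric_iso_dual_quot_dual_coset by blast
qed

end
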